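(* Let $P=\{S_1,\ldots,S_n\}$ be a homothetic square packing with contact graph $G=([n],E)$ whose radii satisfy the weak generic condition. If either of the graphs $([n],E_x)$, $([n],E_y)$ contains a cycle $(n_1,\ldots,n_k)$ with $k\ge n-1$, then $|E|\le 2n-2$.
   Context: Let $S=\{(x,y): -1\le x,y\le 1\}$. A homothetic packing of $n$ squares is a set $P=\{S_1,\ldots,S_n\}$ with $S_i=r_iS+p_i$, $r_i>0$ (radii), $p_i=(x_i,y_i)\in\mathbb{R}^2$ (centres), such that distinct squares have disjoint interiors. Its contact graph is $G=([n],E)$ where $\{i,j\}\in E$ iff $i\ne j$ and $S_i\cap S_j\ne\emptyset$; $E_x$ is the set of pairs $\{i,j\}\in E$ with $r_i+r_j=|x_i-x_j|\ge|y_i-y_j|$ and $E_y$ the set with $r_i+r_j=|y_i-y_j|\ge|x_i-x_j|$. The radii satisfy the weak generic condition if the only function $\sigma:[n]\to\{-1,0,1\}$ with at least $4$ zeroes and $\sum_{i=1}^n\sigma_ir_i=0$ is the zero function. *)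

theory Defs
  imports "HOL-Analysis.Analysis"
begin

text \<open>Squares are indexed by [n] = {0..<n}. Square i has radius r i and centre (x i, y i):
  it is r i * S + (x i, y i) with S = [-1,1]^2.\<close>

definition sq :: "(nat \<Rightarrow> real) \<Rightarrow> (nat \<Rightarrow> real) \<Rightarrow> (nat \<Rightarrow> real) \<Rightarrow> nat \<Rightarrow> (real \<times> real) set" where
  "sq r x y i = {(u, v). \<bar>u - x i\<bar> \<le> r i \<and> \<bar>v - y i\<bar> \<le> r i}"

definition homothetic_packing :: "nat \<Rightarrow> (nat \<Rightarrow> real) \<Rightarrow> (nat \<Rightarrow> real) \<Rightarrow> (nat \<Rightarrow> real) \<Rightarrow> bool" where
  "homothetic_packing n r x y \<longleftrightarrow>
     (\<forall>i<n. r i > 0) \<and>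
     (\<forall>i<n. \<forall>j<n. i \<noteq> j \<longrightarrow> interior (sq r x y i) \<inter> interior (sq r x y j) = {})"

definition contact_edges :: "nat \<Rightarrow> (nat \<Rightarrow> real) \<Rightarrow> (nat \<Rightarrow> real) \<Rightarrow> (nat \<Rightarrow> real) \<Rightarrow> nat set set" where
  "contact_edges n r x y =
     {{i, j} | i j. i < n \<and> j < n \<and> i \<noteq> j \<and> sq r x y i \<inter> sq r x y j \<noteq> {}}"

definition edges_x :: "nat \<Rightarrow> (nat \<Rightarrow> real) \<Rightarrow> (nat \<Rightarrow> real) \<Rightarrow> (nat \<Rightarrow> real) \<Rightarrow> nat set set" where
  "edges_x n r x y =
     {{i, j} | i j. {i, j} \<in> contact_edges n r x y \<and>
        r i + r j = \<bar>x i - x j\<bar> \<and> \<bar>x i - x j\<bar> \<ge> \<bar>y i - y j\<bar>}"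

definition edges_y :: "nat \<Rightarrow> (nat \<Rightarrow> real) \<Rightarrow> (nat \<Rightarrow> real) \<Rightarrow> (nat \<Rightarrow> real) \<Rightarrow> nat set set" where
  "edges_y n r x y =
     {{i, j} | i j. {i, j} \<in> contact_edges n r x y \<and>
        r i + r j = \<bar>y i - y j\<bar> \<and> \<bar>y i - y j\<bar> \<ge> \<bar>x i - x j\<bar>}"

definition weak_generic :: "nat \<Rightarrow> (nat \<Rightarrow> real) \<Rightarrow> bool" where
  "weak_generic n r \<longleftrightarrow>
     (\<forall>\<sigma> :: nat \<Rightarrow> int.
        (\<forall>i<n. \<sigma> i \<in> {-1, 0, 1}) \<and> card {i. i < n \<and> \<sigma> i = 0} \<ge> 4 \<and>
        (\<Sum>i<n. of_int (\<sigma> i) * r i) = 0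
        \<longrightarrow> (\<forall>i<n. \<sigma> i = 0))"

definition is_cycle :: "nat \<Rightarrow> nat set set \<Rightarrow> nat list \<Rightarrow> bool" where
  "is_cycle n Ed c \<longleftrightarrow>
     length c \<ge> 3 \<and> distinct c \<and> set c \<subseteq> {..<n} \<and>
     (\<forall>i < length c. {c ! i, c ! ((i + 1) mod length c)} \<in> Ed)"

end

theory Submission
  imports Defs
begin

text \<open>
  Orient the long cycle, say in \<open>E\<^sub>x\<close>, and record the sign of each horizontal step
  between consecutive touching squares. Summing the steps around the cycle gives a relation
  \<open>\<Sum>\<sigma>\<^sub>v r\<^sub>v = 0\<close> with \<open>\<sigma>\<^sub>v \<in> {-1,0,1}\<close>, whose zeros are the turning points of the cycle and the
  at most one square off the cycle. Weak genericity therefore leaves two cases.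

  If the steps alternate, every cycle square touches one vertical line, alternately from the left
  and from the right; looking at the top of this tower produces two cycle squares with equal radii,
  which weak genericity forbids as soon as the cycle has at least six squares, and the remaining
  configuration (four squares meeting at a corner, plus one more square) is counted directly.

  Otherwise the cycle runs monotonically to the right and then back. Weak genericity keeps the
  breakpoints of the two runs apart, so the only \<open>E\<^sub>x\<close>-contacts between cycle squares are the cycle
  edges. The remaining contacts lie in \<open>E\<^sub>y\<close> and overlap strictly in \<open>x\<close>. They form a forest: a
  cycle of them would be a cycle in \<open>y\<close> that cannot alternate (its squares overlap in \<open>x\<close>) and that
  misses both extreme squares of the first cycle, hence has too few turning points. The extreme
  squares meet such contacts only towards the square off the cycle, and counting gives
  \<open>|E| \<le> 2n - 2\<close>.
\<close>

section \<open>Squares and their contacts\<close>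

lemma abs_intervals_meet:
  fixes a b ra rb :: real
  assumes "ra \<ge> 0" "rb \<ge> 0"
  shows "(\<exists>u. \<bar>u - a\<bar> \<le> ra \<and> \<bar>u - b\<bar> \<le> rb) \<longleftrightarrow> \<bar>a - b\<bar> \<le> ra + rb"
proof
  assume "\<bar>a - b\<bar> \<le> ra + rb"
  then show "\<exists>u. \<bar>u - a\<bar> \<le> ra \<and> \<bar>u - b\<bar> \<le> rb"
    using assms by (intro exI[of _ "max (a - ra) (b - rb)"]) (auto simp: abs_le_iff)
qed auto

lemma abs_intervals_meet_strict:
  fixes a b ra rb :: real
  shows "(\<exists>u. \<bar>u - a\<bar> < ra \<and> \<bar>u - b\<bar> < rb) \<longleftrightarrow> \<bar>a - b\<bar> < ra + rb \<and> ra > 0 \<and> rb > 0"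
proof
  assume "\<bar>a - b\<bar> < ra + rb \<and> ra > 0 \<and> rb > 0"
  then show "\<exists>u. \<bar>u - a\<bar> < ra \<and> \<bar>u - b\<bar> < rb"
    by (intro exI[of _ "(max (a - ra) (b - rb) + min (a + ra) (b + rb)) / 2"])
      (auto simp: abs_less_iff max_def min_def field_simps)
qed auto

lemma interior_sq: "interior (sq r x y i) = {(u, v). \<bar>u - x i\<bar> < r i \<and> \<bar>v - y i\<bar> < r i}"
proof -
  have "sq r x y i = {x i - r i .. x i + r i} \<times> {y i - r i .. y i + r i}"
    unfolding sq_def by (auto simp: abs_le_iff)
  then have "interior (sq r x y i) = {x i - r i <..< x i + r i} \<times> {y i - r i <..< y i + r i}"
    by (simp add: interior_Times)
  then show ?thesis
    by (auto simp: abs_less_iff)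
qed

lemma homothetic_packing_iff:
  "homothetic_packing n r x y \<longleftrightarrow>
     (\<forall>i<n. r i > 0) \<and>
     (\<forall>i<n. \<forall>j<n. i \<noteq> j \<longrightarrow> r i + r j \<le> \<bar>x i - x j\<bar> \<or> r i + r j \<le> \<bar>y i - y j\<bar>)"
proof -
  have meet: "interior (sq r x y i) \<inter> interior (sq r x y j) \<noteq> {} \<longleftrightarrow>
          (\<exists>u. \<bar>u - x i\<bar> < r i \<and> \<bar>u - x j\<bar> < r j) \<and> (\<exists>v. \<bar>v - y i\<bar> < r i \<and> \<bar>v - y j\<bar> < r j)"
    for i j
    unfolding interior_sq by blast
  have "interior (sq r x y i) \<inter> interior (sq r x y j) = {} \<longleftrightarrow>
          r i + r j \<le> \<bar>x i - x j\<bar> \<or> r i + r j \<le> \<bar>y i - y j\<bar>"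
    if "r i > 0" "r j > 0" for i j
    using meet[of i j] that by (auto simp: abs_intervals_meet_strict not_less)
  then show ?thesis
    unfolding homothetic_packing_def by (cases "\<forall>i<n. r i > 0") (simp, blast)
qed

lemma packing_separated:
  "homothetic_packing n r x y \<Longrightarrow> i < n \<Longrightarrow> j < n \<Longrightarrow> i \<noteq> j \<Longrightarrow>
     r i + r j \<le> \<bar>x i - x j\<bar> \<or> r i + r j \<le> \<bar>y i - y j\<bar>"
  by (simp add: homothetic_packing_iff)

lemma sq_meet_iff:
  assumes "r i \<ge> 0" "r j \<ge> 0"
  shows "sq r x y i \<inter> sq r x y j \<noteq> {} \<longleftrightarrow>
           \<bar>x i - x j\<bar> \<le> r i + r j \<and> \<bar>y i - y j\<bar> \<le> r i + r j"
  using assms abs_intervals_meet[of "r i" "r j" "x i" "x j"] abs_intervals_meet[of "r i" "r j" "y i" "y j"]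
  by (auto simp: sq_def)

lemma contact_edges_iff:
  assumes "\<forall>i<n. r i > 0"
  shows "{i, j} \<in> contact_edges n r x y \<longleftrightarrow>
     i < n \<and> j < n \<and> i \<noteq> j \<and> \<bar>x i - x j\<bar> \<le> r i + r j \<and> \<bar>y i - y j\<bar> \<le> r i + r j"
proof -
  have meet: "sq r x y i \<inter> sq r x y j \<noteq> {} \<longleftrightarrow> \<bar>x i - x j\<bar> \<le> r i + r j \<and> \<bar>y i - y j\<bar> \<le> r i + r j"
    if "i < n" "j < n" for i j
    using that assms by (simp add: sq_meet_iff less_imp_le)
  show ?thesis
  proof
    assume "{i, j} \<in> contact_edges n r x y"
    then obtain i' j' where "{i, j} = {i', j'}" "i' < n" "j' < n" "i' \<noteq> j'" "sq r x y i' \<inter> sq r x y j' \<noteq> {}"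
      unfolding contact_edges_def by blast
    then show "i < n \<and> j < n \<and> i \<noteq> j \<and> \<bar>x i - x j\<bar> \<le> r i + r j \<and> \<bar>y i - y j\<bar> \<le> r i + r j"
      using meet[of i' j'] by (auto simp: doubleton_eq_iff abs_minus_commute add.commute)
  next
    assume "i < n \<and> j < n \<and> i \<noteq> j \<and> \<bar>x i - x j\<bar> \<le> r i + r j \<and> \<bar>y i - y j\<bar> \<le> r i + r j"
    then show "{i, j} \<in> contact_edges n r x y"
      unfolding contact_edges_def using meet[of i j] by blast
  qed
qed

lemma contact_edgesE:
  assumes "e \<in> contact_edges n r x y"
  obtains i j where "e = {i, j}" "i < n" "j < n" "i \<noteq> j"
  using assms unfolding contact_edges_def by blast

lemma edges_x_iff:
  "{i, j} \<in> edges_x n r x y \<longleftrightarrow>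
     {i, j} \<in> contact_edges n r x y \<and> r i + r j = \<bar>x i - x j\<bar> \<and> \<bar>y i - y j\<bar> \<le> \<bar>x i - x j\<bar>"
  unfolding edges_x_def
  by (auto simp: doubleton_eq_iff) (metis abs_minus_commute add.commute insert_commute)+

lemma edges_y_iff:
  "{i, j} \<in> edges_y n r x y \<longleftrightarrow>
     {i, j} \<in> contact_edges n r x y \<and> r i + r j = \<bar>y i - y j\<bar> \<and> \<bar>x i - x j\<bar> \<le> \<bar>y i - y j\<bar>"
  unfolding edges_y_def
  by (auto simp: doubleton_eq_iff) (metis abs_minus_commute add.commute insert_commute)+

lemma edges_x_subset: "edges_x n r x y \<subseteq> contact_edges n r x y"
  unfolding edges_x_def by auto

lemma edges_y_subset: "edges_y n r x y \<subseteq> contact_edges n r x y"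
  unfolding edges_y_def by auto

lemma contact_edges_subset_pairs: "contact_edges n r x y \<subseteq> {e. e \<subseteq> {..<n} \<and> card e = 2}"
  by (auto elim!: contact_edgesE)

lemma finite_contact_edges: "finite (contact_edges n r x y)"
  by (rule finite_subset[OF contact_edges_subset_pairs]) (auto intro: finite_subset[of _ "Pow {..<n}"])

lemma contact_edges_swap: "contact_edges n r y x = contact_edges n r x y"
proof -
  have swap: "sq r y x i = prod.swap -` sq r x y i" for i
    by (simp add: sq_def set_eq_iff conj_commute)
  have "sq r y x i \<inter> sq r y x j = {} \<longleftrightarrow> sq r x y i \<inter> sq r x y j = {}" for i j
    unfolding swap vimage_Int[symmetric] by (rule surj_vimage_empty[OF surj_swap])
  then show ?thesis
    unfolding contact_edges_def by simp
qed

lemma edges_x_swap: "edges_x n r y x = edges_y n r x y"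
  unfolding edges_x_def edges_y_def contact_edges_swap[of n r x y] ..

lemma homothetic_packing_swap: "homothetic_packing n r y x \<longleftrightarrow> homothetic_packing n r x y"
  unfolding homothetic_packing_iff by (auto simp: disj_commute)

lemma contact_edges_subset_edges_x_Un_edges_y:
  assumes "homothetic_packing n r x y"
  shows "contact_edges n r x y \<subseteq> edges_x n r x y \<union> edges_y n r x y"
proof
  fix e assume e: "e \<in> contact_edges n r x y"
  then obtain i j where ij: "e = {i, j}" "i < n" "j < n" "i \<noteq> j"
    by (rule contact_edgesE)
  have "\<forall>i<n. r i > 0"
    using assms by (simp add: homothetic_packing_iff)
  then have touch: "\<bar>x i - x j\<bar> \<le> r i + r j" "\<bar>y i - y j\<bar> \<le> r i + r j"
    using e ij contact_edges_iff by auto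
  note sep = packing_separated[OF assms ij(2-4)]
  show "e \<in> edges_x n r x y \<union> edges_y n r x y"
  proof (cases "\<bar>y i - y j\<bar> \<le> \<bar>x i - x j\<bar>")
    case True
    then have "r i + r j = \<bar>x i - x j\<bar>"
      using touch sep by linarith
    then show ?thesis
      using True e ij(1) by (simp add: edges_x_iff)
  next
    case False
    then have "r i + r j = \<bar>y i - y j\<bar>"
      using touch sep by linarith
    then show ?thesis
      using False e ij(1) by (simp add: edges_y_iff)
  qed
qed

lemma weak_generic_sums_differ:
  assumes wg: "weak_generic n r"
    and PQ: "P \<subseteq> {..<n}" "Q \<subseteq> {..<n}" "P \<inter> Q = {}" "P \<union> Q \<noteq> {}"
    and small: "card P + card Q + 4 \<le> n"
  shows "(\<Sum>i\<in>P. r i) \<noteq> (\<Sum>i\<in>Q. r i)"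
proof
  assume sums: "(\<Sum>i\<in>P. r i) = (\<Sum>i\<in>Q. r i)"
  define \<sigma> :: "nat \<Rightarrow> int" where "\<sigma> i = (if i \<in> P then 1 else if i \<in> Q then -1 else 0)" for i
  have fin: "finite P" "finite Q"
    using PQ(1,2) finite_subset by auto
  have "(\<Sum>i<n. of_int (\<sigma> i) * r i) = (\<Sum>i<n. if i \<in> P then r i else 0) - (\<Sum>i<n. if i \<in> Q then r i else 0)"
    unfolding sum_subtractf[symmetric] using PQ(3) by (intro sum.cong) (auto simp: \<sigma>_def)
  also have "\<dots> = (\<Sum>i\<in>P. r i) - (\<Sum>i\<in>Q. r i)"
    using PQ by (simp add: sum.If_cases Int_absorb1)
  finally have "(\<Sum>i<n. of_int (\<sigma> i) * r i) = 0"
    using sums by simp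
  moreover have "{i. i < n \<and> \<sigma> i = 0} = {..<n} - (P \<union> Q)"
    by (auto simp: \<sigma>_def)
  then have "card {i. i < n \<and> \<sigma> i = 0} \<ge> 4"
    using PQ fin small by (simp add: card_Diff_subset card_Un_disjoint)
  moreover have "\<forall>i<n. \<sigma> i \<in> {-1, 0, 1}"
    by (simp add: \<sigma>_def)
  ultimately have "\<forall>i<n. \<sigma> i = 0"
    using wg unfolding weak_generic_def by blast
  moreover obtain i where "i \<in> P \<union> Q"
    using PQ(4) by blast
  moreover from this have "i < n" "\<sigma> i \<noteq> 0"
    using PQ(1-3) by (auto simp: \<sigma>_def)
  ultimately show False
    by blast
qed

section \<open>Cyclic sequences and cycles\<close>

definition cyc_nth :: "'a list \<Rightarrow> nat \<Rightarrow> 'a" where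
  "cyc_nth c i = c ! (i mod length c)"

lemma cyc_nth_mod [simp]: "cyc_nth c (i mod length c) = cyc_nth c i"
  by (simp add: cyc_nth_def)

lemma cyc_nth_add_length [simp]: "cyc_nth c (i + length c) = cyc_nth c i"
  by (simp add: cyc_nth_def)

lemma cyc_nth_in_set: "c \<noteq> [] \<Longrightarrow> cyc_nth c i \<in> set c"
  by (simp add: cyc_nth_def)

lemma in_set_iff_cyc_nth: "v \<in> set c \<longleftrightarrow> (\<exists>l<length c. v = cyc_nth c l)"
  by (auto simp: cyc_nth_def in_set_conv_nth)

lemma cyc_nth_eq_iff:
  "distinct c \<Longrightarrow> c \<noteq> [] \<Longrightarrow> cyc_nth c i = cyc_nth c j \<longleftrightarrow> i mod length c = j mod length c"
  by (simp add: cyc_nth_def nth_eq_iff_index_eq)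

lemma cyc_nth_shift_neq:
  assumes "distinct c" "0 < d" "d < length c"
  shows "cyc_nth c (i + d) \<noteq> cyc_nth c i"
proof
  assume "cyc_nth c (i + d) = cyc_nth c i"
  moreover have "c \<noteq> []"
    using assms by auto
  ultimately have "i mod length c = (i + d) mod length c"
    using assms(1) cyc_nth_eq_iff by metis
  then have "length c dvd d"
    using mod_eq_dvd_iff_nat[of i "i + d" "length c"] by simp
  then show False
    using assms by (simp add: nat_dvd_not_less)
qed

lemma cyc_nth_rotate:
  assumes "c \<noteq> []"
  shows "cyc_nth (rotate s c) i = cyc_nth c (i + s)"
proof -
  have "cyc_nth (rotate s c) i = c ! ((s + i mod length c) mod length c)"
    using assms by (simp add: cyc_nth_def nth_rotate)
  also have "(s + i mod length c) mod length c = (i + s) mod length c"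
    by (simp add: mod_add_right_eq add.commute)
  finally show ?thesis
    by (simp add: cyc_nth_def)
qed

lemma periodic_switch:
  fixes P :: "nat \<Rightarrow> bool"
  assumes k: "k > 0" and periodic: "\<And>a. P (a mod k) = P a"
    and a: "a < k" "P a" and b: "b < k" "\<not> P b"
  shows "\<exists>i<k. \<not> P (i + k - 1) \<and> P i"
proof (rule ccontr)
  assume no_switch: "\<not> ?thesis"
  have "\<not> P (Suc m)" if "\<not> P m" for m
  proof -
    define i where "i = Suc m mod k"
    have "(i + k - 1) mod k = (i + (k - 1)) mod k"
      using k by (simp add: algebra_simps)
    also have "\<dots> = (Suc m + (k - 1)) mod k"
      unfolding i_def by (rule mod_add_left_eq)
    also have "Suc m + (k - 1) = m + k"
      using k by linarith
    finally have "\<not> P (i + k - 1)"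
      using that by (metis periodic mod_add_self2)
    moreover have "i < k"
      using k by (simp add: i_def)
    ultimately have "\<not> P i"
      using no_switch by blast
    then show "\<not> P (Suc m)"
      unfolding i_def using periodic by metis
  qed
  then have "\<not> P (b + d)" for d
    using b by (induction d) auto
  from this[of "a + k - b"] show False
    using a b periodic[of "a + k"] periodic[of a] by simp
qed

lemma is_cycle_iff_cyc_nth:
  "is_cycle n Ed c \<longleftrightarrow>
     length c \<ge> 3 \<and> distinct c \<and> set c \<subseteq> {..<n} \<and> (\<forall>i. {cyc_nth c i, cyc_nth c (Suc i)} \<in> Ed)"
proof -
  have edges_iff: "(\<forall>i < length c. {c ! i, c ! ((i + 1) mod length c)} \<in> Ed) \<longleftrightarrow>
          (\<forall>i. {cyc_nth c i, cyc_nth c (Suc i)} \<in> Ed)" if "c \<noteq> []"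
  proof
    assume edges: "\<forall>i < length c. {c ! i, c ! ((i + 1) mod length c)} \<in> Ed"
    show "\<forall>i. {cyc_nth c i, cyc_nth c (Suc i)} \<in> Ed"
    proof
      fix i
      have "i mod length c < length c"
        using that by simp
      then show "{cyc_nth c i, cyc_nth c (Suc i)} \<in> Ed"
        using edges by (auto simp: cyc_nth_def mod_Suc_eq)
    qed
  next
    assume edges: "\<forall>i. {cyc_nth c i, cyc_nth c (Suc i)} \<in> Ed"
    show "\<forall>i < length c. {c ! i, c ! ((i + 1) mod length c)} \<in> Ed"
    proof (intro allI impI)
      fix i assume "i < length c"
      then show "{c ! i, c ! ((i + 1) mod length c)} \<in> Ed"
        using spec[OF edges, of i] by (simp add: cyc_nth_def)
    qed
  qed
  show ?thesis
  proof (cases "c = []")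
    case False
    then show ?thesis
      unfolding is_cycle_def edges_iff[OF False] by simp
  qed (simp add: is_cycle_def)
qed

lemma is_cycle_edge: "is_cycle n Ed c \<Longrightarrow> {cyc_nth c i, cyc_nth c (Suc i)} \<in> Ed"
  by (simp add: is_cycle_iff_cyc_nth)

lemma is_cycle_mono: "is_cycle n Ed c \<Longrightarrow> Ed \<subseteq> Ed' \<Longrightarrow> is_cycle n Ed' c"
  unfolding is_cycle_def by blast

lemma is_cycle_rotate:
  assumes "is_cycle n Ed c"
  shows "is_cycle n Ed (rotate s c)"
proof -
  have "c \<noteq> []"
    using assms by (auto simp: is_cycle_def)
  then show ?thesis
    using assms by (simp add: is_cycle_iff_cyc_nth cyc_nth_rotate)
qed

lemma is_cycle_length_le:
  assumes "is_cycle n Ed c"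
  shows "length c \<le> n"
proof -
  have "distinct c" "set c \<subseteq> {..<n}"
    using assms by (auto simp: is_cycle_def)
  then show ?thesis
    by (metis card_lessThan card_mono distinct_card finite_lessThan)
qed

lemma is_cycle_two_neighbours:
  assumes cyc: "is_cycle n Ed c" and v: "v \<in> set c"
  obtains u1 u2 where "u1 \<noteq> u2" "{v, u1} \<in> Ed" "{v, u2} \<in> Ed"
proof -
  let ?k = "length c"
  obtain l where l: "v = cyc_nth c l"
    using v unfolding in_set_iff_cyc_nth by blast
  have k: "?k \<ge> 3" "distinct c"
    using cyc unfolding is_cycle_def by blast+
  have "Suc (l + ?k - 1) = l + ?k"
    using k by simp
  then have "cyc_nth c (Suc (l + ?k - 1)) = v"
    using l by simp
  then have "{v, cyc_nth c (l + ?k - 1)} \<in> Ed"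
    using is_cycle_edge[OF cyc, of "l + ?k - 1"] by (simp add: insert_commute)
  moreover have "{v, cyc_nth c (Suc l)} \<in> Ed"
    using is_cycle_edge[OF cyc, of l] l by simp
  moreover have "cyc_nth c (Suc l + (?k - 2)) \<noteq> cyc_nth c (Suc l)"
    using k by (intro cyc_nth_shift_neq) auto
  moreover have "Suc l + (?k - 2) = l + ?k - 1"
    using k by simp
  ultimately show ?thesis
    using that[of "cyc_nth c (Suc l)" "cyc_nth c (l + ?k - 1)"] by argo
qed

lemma nonbacktracking_walk:
  assumes u0: "u0 \<in> W"
    and deg: "\<And>u. u \<in> W \<Longrightarrow> \<exists>v1 v2. v1 \<noteq> v2 \<and> v1 \<in> W \<and> v2 \<in> W \<and> {u, v1} \<in> Ed \<and> {u, v2} \<in> Ed"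
  obtains s where "\<And>i. s i \<in> W" "\<And>i. {s i, s (Suc i)} \<in> Ed" "\<And>i. s (Suc (Suc i)) \<noteq> s i"
proof -
  define next_vertex where "next_vertex p u = (SOME v. v \<in> W \<and> {u, v} \<in> Ed \<and> v \<noteq> p)" for p u
  have next_vertex: "next_vertex p u \<in> W \<and> {u, next_vertex p u} \<in> Ed \<and> next_vertex p u \<noteq> p"
    if "u \<in> W" for p u
  proof -
    have "\<exists>v. v \<in> W \<and> {u, v} \<in> Ed \<and> v \<noteq> p"
      using deg[OF that] by metis
    then show ?thesis
      unfolding next_vertex_def by (rule someI_ex)
  qed
  obtain v0 where v0: "v0 \<in> W" "{u0, v0} \<in> Ed"
    using deg[OF u0] by blast
  define pair where "pair = rec_nat (u0, v0) (\<lambda>_ (p, u). (u, next_vertex p u))"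
  have pair_Suc: "pair (Suc i) = (snd (pair i), next_vertex (fst (pair i)) (snd (pair i)))" for i
    by (simp add: pair_def split_beta)
  have inv: "fst (pair i) \<in> W \<and> snd (pair i) \<in> W \<and> {fst (pair i), snd (pair i)} \<in> Ed" for i
  proof (induction i)
    case 0
    then show ?case
      using u0 v0 by (simp add: pair_def)
  next
    case (Suc i)
    then show ?case
      using next_vertex[of "snd (pair i)" "fst (pair i)"] by (simp add: pair_Suc)
  qed
  have snd_pair: "snd (pair i) = fst (pair (Suc i))" for i
    by (simp add: pair_Suc)
  show ?thesis
  proof (rule that[of "\<lambda>i. fst (pair i)"])
    show "fst (pair i) \<in> W" for i
      using inv by blast
    show "{fst (pair i), fst (pair (Suc i))} \<in> Ed" for i
      using inv[of i] by (simp add: snd_pair)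
    show "fst (pair (Suc (Suc i))) \<noteq> fst (pair i)" for i
      using next_vertex[of "snd (pair i)" "fst (pair i)"] inv[of i] by (simp add: pair_Suc)
  qed
qed

lemma first_repetition:
  fixes s :: "nat \<Rightarrow> 'a"
  assumes "finite W" "\<And>i. s i \<in> W"
  obtains i0 j0 where "i0 < j0" "s i0 = s j0" "\<And>a b. a < b \<Longrightarrow> b < j0 \<Longrightarrow> s a \<noteq> s b"
proof -
  have "\<not> inj_on s {..card W}"
  proof
    assume "inj_on s {..card W}"
    then have "card (s ` {..card W}) = Suc (card W)"
      by (simp add: card_image)
    moreover have "card (s ` {..card W}) \<le> card W"
      using assms by (intro card_mono) auto
    ultimately show False
      by simp
  qed
  then obtain a b where "a < b" "s a = s b"
    unfolding inj_on_def by (metis linorder_neqE_nat)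
  define j0 where "j0 = (LEAST j. \<exists>i<j. s i = s j)"
  have "\<exists>i<j0. s i = s j0"
    unfolding j0_def by (rule LeastI[of _ b]) (use \<open>a < b\<close> \<open>s a = s b\<close> in auto)
  then obtain i0 where "i0 < j0" "s i0 = s j0"
    by blast
  moreover have "s a' \<noteq> s b'" if "a' < b'" "b' < j0" for a' b'
  proof
    assume "s a' = s b'"
    then have "j0 \<le> b'"
      unfolding j0_def using that(1) by (intro Least_le) blast
    then show False
      using that by simp
  qed
  ultimately show ?thesis
    by (rule that)
qed

lemma cycle_of_nonbacktracking_walk:
  assumes fin: "finite W" and W: "W \<subseteq> {..<n}" and no_loops: "\<And>u. {u} \<notin> Ed"
    and walk: "\<And>i. s i \<in> W" "\<And>i. {s i, s (Suc i)} \<in> Ed" "\<And>i. s (Suc (Suc i)) \<noteq> s i"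
  shows "\<exists>c. is_cycle n Ed c"
proof -
  obtain i0 j0 where i0: "i0 < j0" "s i0 = s j0" and first: "\<And>a b. a < b \<Longrightarrow> b < j0 \<Longrightarrow> s a \<noteq> s b"
    by (rule first_repetition[of W s]) (use fin walk(1) in auto)
  define L where "L = j0 - i0"
  define c where "c = map s [i0..<j0]"
  have c_nth: "c ! l = s (i0 + l)" if "l < L" for l
    using that by (simp add: c_def L_def)
  have "inj_on s (set [i0..<j0])"
    unfolding inj_on_def using first by (metis atLeastLessThan_iff linorder_neqE_nat set_upt)
  then have "distinct c"
    by (simp add: c_def distinct_map)
  have "L \<noteq> 1"
  proof
    assume "L = 1"
    then have "j0 = Suc i0"
      using i0 by (simp add: L_def)
    then show False
      using walk(2)[of i0] i0 no_loops by simp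
  qed
  moreover have "L \<noteq> 2"
  proof
    assume "L = 2"
    then have "j0 = Suc (Suc i0)"
      using i0 by (simp add: L_def)
    then show False
      using walk(3)[of i0] i0 by simp
  qed
  ultimately have L3: "L \<ge> 3"
    using i0 by (simp add: L_def)
  have "{c ! l, c ! ((l + 1) mod L)} \<in> Ed" if l: "l < L" for l
  proof (cases "l + 1 < L")
    case True
    then show ?thesis
      using c_nth[OF l] c_nth[OF True] walk(2)[of "i0 + l"] by simp
  next
    case False
    then have "l + 1 = L"
      using l by simp
    then have "Suc (i0 + l) = j0" "(l + 1) mod L = 0"
      using i0 by (auto simp: L_def)
    moreover have "c ! 0 = s i0"
      using c_nth[of 0] L3 by simp
    ultimately show ?thesis
      using c_nth[OF l] walk(2)[of "i0 + l"] i0 by simp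
  qed
  moreover have "set c \<subseteq> {..<n}"
    using walk(1) W by (auto simp: c_def)
  ultimately have "is_cycle n Ed c"
    using \<open>distinct c\<close> L3 by (simp add: is_cycle_def c_def L_def)
  then show ?thesis
    by blast
qed

definition edges_within :: "nat set \<Rightarrow> nat set set \<Rightarrow> bool" where
  "edges_within W Ed \<longleftrightarrow> (\<forall>e\<in>Ed. \<exists>u v. e = {u, v} \<and> u \<noteq> v \<and> u \<in> W \<and> v \<in> W)"

lemma acyclic_has_leaf:
  assumes fin: "finite W" and W: "W \<subseteq> {..<n}" "W \<noteq> {}" and within: "edges_within W Ed"
    and acyclic: "\<nexists>c. is_cycle n Ed c"
  obtains u where "u \<in> W"
    "\<And>v1 v2. v1 \<in> W \<Longrightarrow> v2 \<in> W \<Longrightarrow> {u, v1} \<in> Ed \<Longrightarrow> {u, v2} \<in> Ed \<Longrightarrow> v1 = v2"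
proof -
  have no_loops: "{u} \<notin> Ed" for u
    using within by (force simp: edges_within_def doubleton_eq_iff)
  have "\<not> (\<forall>u\<in>W. \<exists>v1 v2. v1 \<noteq> v2 \<and> v1 \<in> W \<and> v2 \<in> W \<and> {u, v1} \<in> Ed \<and> {u, v2} \<in> Ed)"
  proof
    assume "\<forall>u\<in>W. \<exists>v1 v2. v1 \<noteq> v2 \<and> v1 \<in> W \<and> v2 \<in> W \<and> {u, v1} \<in> Ed \<and> {u, v2} \<in> Ed"
    moreover obtain u0 where "u0 \<in> W"
      using W(2) by blast
    ultimately obtain s where "\<And>i. s i \<in> W" "\<And>i. {s i, s (Suc i)} \<in> Ed" "\<And>i. s (Suc (Suc i)) \<noteq> s i"
      using nonbacktracking_walk by metis
    then show False
      using cycle_of_nonbacktracking_walk[OF fin W(1) no_loops] acyclic by blast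
  qed
  then show ?thesis
    using that by blast
qed

lemma card_edges_at_leaf:
  assumes within: "edges_within W Ed" and "finite W"
    and leaf: "\<And>v1 v2. v1 \<in> W \<Longrightarrow> v2 \<in> W \<Longrightarrow> {u, v1} \<in> Ed \<Longrightarrow> {u, v2} \<in> Ed \<Longrightarrow> v1 = v2"
  shows "card {e \<in> Ed. u \<in> e} \<le> 1"
proof -
  have other_end: "\<exists>v\<in>W. e = {u, v}" if e: "e \<in> Ed" "u \<in> e" for e
  proof -
    obtain a b where "e = {a, b}" "a \<in> W" "b \<in> W"
      using e(1) within by (auto simp: edges_within_def)
    then show ?thesis
      using e(2) by auto
  qed
  have "e1 = e2" if "e1 \<in> {e \<in> Ed. u \<in> e}" "e2 \<in> {e \<in> Ed. u \<in> e}" for e1 e2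
    using other_end[of e1] other_end[of e2] leaf that by auto
  moreover have "finite {e \<in> Ed. u \<in> e}"
    using within \<open>finite W\<close> by (auto simp: edges_within_def intro: finite_subset[of _ "Pow W"])
  ultimately show ?thesis
    by (simp add: card_le_Suc0_iff_eq)
qed

lemma card_edges_less_if_acyclic:
  assumes "finite W" "W \<subseteq> {..<n}" "W \<noteq> {}" "edges_within W Ed" "\<nexists>c. is_cycle n Ed c"
  shows "card Ed < card W"
  using assms
proof (induction "card W" arbitrary: W Ed rule: less_induct)
  case less
  obtain u where u: "u \<in> W"
    and leaf: "\<And>v1 v2. v1 \<in> W \<Longrightarrow> v2 \<in> W \<Longrightarrow> {u, v1} \<in> Ed \<Longrightarrow> {u, v2} \<in> Ed \<Longrightarrow> v1 = v2"
    using acyclic_has_leaf[OF less.prems] by blast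
  define W' where "W' = W - {u}"
  define Ed' where "Ed' = {e \<in> Ed. u \<notin> e}"
  have "finite Ed"
    using less.prems(1,4) by (auto simp: edges_within_def intro: finite_subset[of _ "Pow W"])
  moreover have "Ed - Ed' = {e \<in> Ed. u \<in> e}"
    by (auto simp: Ed'_def)
  ultimately have card_Ed: "card Ed \<le> card Ed' + 1"
    using card_edges_at_leaf[OF less.prems(4,1) leaf] card_Diff_subset[of Ed' Ed]
      card_mono[of Ed Ed'] by (force simp: Ed'_def)
  show ?case
  proof (cases "W' = {}")
    case True
    then have "W = {u}"
      using u by (auto simp: W'_def)
    then have "Ed = {}"
      using less.prems(4) by (auto simp: edges_within_def)
    then show ?thesis
      using \<open>W = {u}\<close> by simp
  next
    case False
    have "card W' < card W"
      using u less.prems(1) unfolding W'_def by (metis card_Diff1_less)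
    moreover have "edges_within W' Ed'"
      using less.prems(4) by (fastforce simp: edges_within_def Ed'_def W'_def)
    moreover have "\<nexists>c. is_cycle n Ed' c"
      using less.prems(5) is_cycle_mono[of n Ed' _ Ed] by (auto simp: Ed'_def)
    ultimately have "card Ed' < card W'"
      using less.hyps[of W' Ed'] less.prems(1,2) False by (auto simp: W'_def)
    moreover have "card W' = card W - 1"
      using u less.prems(1) by (simp add: W'_def)
    ultimately show ?thesis
      using card_Ed by linarith
  qed
qed

section \<open>Tight cycles\<close>

definition dir :: "(nat \<Rightarrow> real) \<Rightarrow> nat list \<Rightarrow> nat \<Rightarrow> int" where
  "dir z c i = (if z (cyc_nth c i) < z (cyc_nth c (Suc i)) then 1 else -1)"

definition turns :: "(nat \<Rightarrow> real) \<Rightarrow> nat list \<Rightarrow> nat set" where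
  "turns z c = {i. i < length c \<and> dir z c (i + length c - 1) \<noteq> dir z c i}"

lemma dir_cases: "dir z c i = 1 \<or> dir z c i = -1"
  by (simp add: dir_def)

lemma dir_mod [simp]: "dir z c (i mod length c) = dir z c i"
proof -
  have "cyc_nth c (Suc (i mod length c)) = cyc_nth c (Suc i)"
    by (simp add: cyc_nth_def mod_Suc_eq)
  then show ?thesis
    by (simp add: dir_def)
qed

lemma dir_cong: "i mod length c = j mod length c \<Longrightarrow> dir z c i = dir z c j"
  by (metis dir_mod)

lemma dir_rotate: "c \<noteq> [] \<Longrightarrow> dir z (rotate s c) i = dir z c (i + s)"
  by (simp add: dir_def cyc_nth_rotate)

locale tight_cycle =
  fixes n :: nat and r z :: "nat \<Rightarrow> real" and c :: "nat list"
  assumes length_ge_3: "length c \<ge> 3"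
    and distinct: "distinct c"
    and set_subset: "set c \<subseteq> {..<n}"
    and radius_pos: "\<And>i. i < n \<Longrightarrow> r i > 0"
    and tight: "\<And>i. \<bar>z (cyc_nth c i) - z (cyc_nth c (Suc i))\<bar> = r (cyc_nth c i) + r (cyc_nth c (Suc i))"
begin

abbreviation k where "k \<equiv> length c"
abbreviation w where "w \<equiv> cyc_nth c"

lemma nonempty: "c \<noteq> []"
  using length_ge_3 by auto

lemma length_pos: "0 < k"
  using length_ge_3 by linarith

lemma w_in_set: "w i \<in> set c"
  using cyc_nth_in_set[OF nonempty] .

lemma w_less: "w i < n"
  using w_in_set set_subset by auto

lemma radius_w_pos: "r (w i) > 0"
  using radius_pos w_less by blast

lemma w_eq_iff: "w i = w j \<longleftrightarrow> i mod k = j mod k"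
  using cyc_nth_eq_iff[OF distinct nonempty] .

lemma w_shift_neq: "0 < d \<Longrightarrow> d < k \<Longrightarrow> w (i + d) \<noteq> w i"
  using cyc_nth_shift_neq[OF distinct] .

lemma Suc_prev: "Suc (i + k - 1) = i + k"
  using length_ge_3 by simp

lemma w_prev: "w (Suc (i + k - 1)) = w i"
  by (simp only: Suc_prev cyc_nth_add_length)

lemma dir_prev_Suc: "dir z c (Suc (i + k - 1)) = dir z c i"
  by (rule dir_cong) (simp only: Suc_prev mod_add_self2)

lemma card_outside: "card ({..<n} - set c) = n - k"
  using set_subset distinct_card[OF distinct] by (simp add: card_Diff_subset)

lemma step: "z (w (Suc i)) - z (w i) = of_int (dir z c i) * (r (w i) + r (w (Suc i)))"
  using tight[of i] radius_w_pos[of i] radius_w_pos[of "Suc i"]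
  by (auto simp: dir_def abs_if split: if_splits)

lemma sum_steps: "(\<Sum>i<k. z (w (Suc i)) - z (w i)) = 0"
  using sum_lessThan_telescope[of "\<lambda>i. z (w i)" k] cyc_nth_add_length[of c 0] nonempty by simp

lemma dir_takes_both_signs: "\<exists>i<k. dir z c i = 1" "\<exists>i<k. dir z c i = -1"
proof -
  have pos: "r (w i) + r (w (Suc i)) > 0" for i
    using radius_w_pos[of i] radius_w_pos[of "Suc i"] by simp
  have "k > 0"
    using length_ge_3 by linarith
  show "\<exists>i<k. dir z c i = 1"
  proof (rule ccontr)
    assume "\<not> ?thesis"
    then have "\<forall>i\<in>{..<k}. z (w (Suc i)) - z (w i) < 0"
      using step pos dir_cases by (metis lessThan_iff mult_minus1 neg_less_0_iff_less of_int_1 of_int_minus)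
    then have "(\<Sum>i<k. z (w (Suc i)) - z (w i)) < (\<Sum>i<k. 0)"
      using \<open>k > 0\<close> by (intro sum_strict_mono) auto
    then show False
      using sum_steps by simp
  qed
  show "\<exists>i<k. dir z c i = -1"
  proof (rule ccontr)
    assume "\<not> ?thesis"
    then have "\<forall>i\<in>{..<k}. z (w (Suc i)) - z (w i) > 0"
      using step pos dir_cases by (metis lessThan_iff mult_1 of_int_1)
    then have "(\<Sum>i<k. z (w (Suc i)) - z (w i)) > (\<Sum>i<k. 0)"
      using \<open>k > 0\<close> by (intro sum_strict_mono) auto
    then show False
      using sum_steps by simp
  qed
qed

text \<open>The coefficient \<open>\<sigma>\<close> of the paper: cycle vertex \<open>w i\<close> receives the average of the signs of its two
  incident steps, which vanishes exactly at the turning points.\<close>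

definition turn_weight :: "nat \<Rightarrow> int" where
  "turn_weight i = (dir z c i + dir z c (i + k - 1)) div 2"

definition sigma :: "nat \<Rightarrow> int" where
  "sigma v = (\<Sum>i<k. if w i = v then turn_weight i else 0)"

lemma two_turn_weight: "2 * turn_weight i = dir z c i + dir z c (i + k - 1)"
  unfolding turn_weight_def using dir_cases[of z c i] dir_cases[of z c "i + k - 1"] by auto

lemma sigma_w:
  assumes j: "j < k"
  shows "sigma (w j) = turn_weight j"
proof -
  from j have "w i = w j \<longleftrightarrow> i = j" if "i < k" for i
    using that w_eq_iff by simp
  then have "sigma (w j) = (\<Sum>i<k. if i = j then turn_weight i else 0)"
    unfolding sigma_def by (intro sum.cong) auto
  then show ?thesis
    using j by simp
qed

lemma sigma_outside: "v \<notin> set c \<Longrightarrow> sigma v = 0"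
  unfolding sigma_def using w_in_set by (intro sum.neutral) auto

lemma sigma_values: "sigma v \<in> {-1, 0, 1}"
proof (cases "v \<in> set c")
  case True
  then obtain j where "j < k" "v = w j"
    unfolding in_set_iff_cyc_nth by blast
  then show ?thesis
    using sigma_w two_turn_weight[of j] dir_cases[of z c j] dir_cases[of z c "j + k - 1"] by auto
qed (simp add: sigma_outside)

lemma sum_turn_weight: "(\<Sum>i<k. of_int (turn_weight i) * r (w i)) = 0"
proof -
  define g where "g i = of_int (dir z c (i + k - 1)) * r (w i)" for i
  have g_Suc: "g (Suc i) = of_int (dir z c i) * r (w (Suc i))" for i
  proof -
    have "(Suc i + k - 1) mod k = i mod k"
      by simp
    then have "dir z c (Suc i + k - 1) = dir z c i"
      by (rule dir_cong)
    then show ?thesis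
      unfolding g_def by simp
  qed
  have "g k = g 0"
  proof -
    have "k + k - 1 = (0 + k - 1) + k"
      using length_ge_3 by simp
    then have "(k + k - 1) mod k = (0 + k - 1) mod k"
      by (metis mod_add_self2)
    then have "dir z c (k + k - 1) = dir z c (0 + k - 1)"
      by (rule dir_cong)
    then show ?thesis
      unfolding g_def using cyc_nth_add_length[of c 0] by simp
  qed
  then have shift: "(\<Sum>i<k. g (Suc i)) = (\<Sum>i<k. g i)"
    using sum.lessThan_Suc_shift[of g k] by simp
  have "(\<Sum>i<k. of_int (dir z c i) * (r (w i) + r (w (Suc i)))) = 0"
    using sum_steps step by simp
  then have "(\<Sum>i<k. of_int (dir z c i) * r (w i)) + (\<Sum>i<k. g (Suc i)) = 0"
    by (simp add: g_Suc distrib_left sum.distrib)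
  then have "(\<Sum>i<k. of_int (dir z c i) * r (w i) + g i) = 0"
    unfolding shift by (simp add: sum.distrib)
  moreover have "of_int (dir z c i) * r (w i) + g i = 2 * (of_int (turn_weight i) * r (w i))" for i
  proof -
    have "of_int (dir z c i) * r (w i) + g i = (of_int (dir z c i) + of_int (dir z c (i + k - 1))) * r (w i)"
      unfolding g_def by (simp add: distrib_right)
    also have "\<dots> = of_int (2 * turn_weight i) * r (w i)"
      unfolding two_turn_weight by simp
    finally show ?thesis
      by simp
  qed
  ultimately have "2 * (\<Sum>i<k. of_int (turn_weight i) * r (w i)) = 0"
    by (simp add: sum_distrib_left)
  then show ?thesis
    by simp
qed

lemma sum_sigma_radius: "(\<Sum>v<n. of_int (sigma v) * r v) = 0"
proof -
  have "(\<Sum>v<n. of_int (sigma v) * r v) = (\<Sum>v<n. \<Sum>i<k. if w i = v then of_int (turn_weight i) * r v else 0)"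
    unfolding sigma_def of_int_sum sum_distrib_right by (intro sum.cong) auto
  also have "\<dots> = (\<Sum>i<k. \<Sum>v<n. if w i = v then of_int (turn_weight i) * r v else 0)"
    by (rule sum.swap)
  also have "\<dots> = (\<Sum>i<k. of_int (turn_weight i) * r (w i))"
    using w_less by (intro sum.cong) (auto simp: sum.delta)
  finally show ?thesis
    using sum_turn_weight by simp
qed

lemma dir_prev:
  assumes "0 < j"
  shows "dir z c (j + k - 1) = dir z c (j - 1)"
proof -
  have "j + k - 1 = (j - 1) + k"
    using assms by simp
  then show ?thesis
    by (metis dir_cong mod_add_self2)
qed

lemma in_turnsI: "j < k \<Longrightarrow> 0 < j \<Longrightarrow> dir z c (j - 1) \<noteq> dir z c j \<Longrightarrow> j \<in> turns z c"
  unfolding turns_def using dir_prev[of j] by simp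

lemma sigma_turn: "j \<in> turns z c \<Longrightarrow> sigma (w j) = 0"
  using two_turn_weight[of j] dir_cases[of z c j] dir_cases[of z c "j + k - 1"]
  by (auto simp: turns_def sigma_w)

lemma card_sigma_zeros: "n - k + card (turns z c) \<le> card {v. v < n \<and> sigma v = 0}"
proof -
  have "inj_on w (turns z c)"
    using w_eq_iff by (auto simp: inj_on_def turns_def)
  then have "card (w ` turns z c) = card (turns z c)"
    by (rule card_image)
  moreover have "({..<n} - set c) \<inter> w ` turns z c = {}"
    using w_in_set by auto
  ultimately have "card (({..<n} - set c) \<union> w ` turns z c) = n - k + card (turns z c)"
    using card_outside by (simp add: card_Un_disjoint turns_def)
  moreover have "({..<n} - set c) \<union> w ` turns z c \<subseteq> {v. v < n \<and> sigma v = 0}"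
    using sigma_outside sigma_turn w_less by auto
  then have "card (({..<n} - set c) \<union> w ` turns z c) \<le> card {v. v < n \<and> sigma v = 0}"
    by (rule card_mono[rotated]) simp
  ultimately show ?thesis
    by simp
qed

lemma alternating_if_sigma_vanishes:
  assumes "\<forall>v<n. sigma v = 0"
  shows "dir z c (Suc i) = - dir z c i"
proof -
  define j where "j = Suc i mod k"
  have "j < k"
    using length_pos by (simp add: j_def)
  then have "turn_weight j = 0"
    using assms sigma_w w_less by metis
  then have "dir z c j = - dir z c (j + k - 1)"
    using two_turn_weight[of j] by simp
  moreover have "dir z c j = dir z c (Suc i)"
    unfolding j_def by (rule dir_mod)
  moreover have "(j + k - 1) mod k = i mod k"
  proof -
    have "(j + k - 1) mod k = (j + (k - 1)) mod k"
      using length_ge_3 by (simp add: algebra_simps)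
    also have "\<dots> = (Suc i + (k - 1)) mod k"
      unfolding j_def by (rule mod_add_left_eq)
    also have "Suc i + (k - 1) = i + k"
      using length_ge_3 by simp
    finally show ?thesis
      by simp
  qed
  then have "dir z c (j + k - 1) = dir z c i"
    by (rule dir_cong)
  ultimately show ?thesis
    by simp
qed

lemma alternating_or_few_turns:
  assumes "weak_generic n r"
  shows "(\<forall>i. dir z c (Suc i) = - dir z c i) \<or> n - k + card (turns z c) \<le> 3"
proof (rule disjCI)
  assume "\<not> n - k + card (turns z c) \<le> 3"
  then have "card {v. v < n \<and> sigma v = 0} \<ge> 4"
    using card_sigma_zeros by linarith
  then have "\<forall>v<n. sigma v = 0"
    using assms sigma_values sum_sigma_radius unfolding weak_generic_def by blast
  then show "\<forall>i. dir z c (Suc i) = - dir z c i"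
    using alternating_if_sigma_vanishes by blast
qed

lemma two_le_card_turns: "2 \<le> card (turns z c)"
proof -
  note k = length_pos
  obtain a1 a2 where a: "a1 < k" "dir z c a1 = 1" "a2 < k" "dir z c a2 = -1"
    using dir_takes_both_signs by blast
  obtain i1 where i1: "i1 < k" "dir z c (i1 + k - 1) \<noteq> 1" "dir z c i1 = 1"
    using periodic_switch[of k "\<lambda>i. dir z c i = 1", OF k _ a(1,2) a(3)] a(4) by auto
  obtain i2 where i2: "i2 < k" "dir z c (i2 + k - 1) \<noteq> -1" "dir z c i2 = -1"
    using periodic_switch[of k "\<lambda>i. dir z c i = -1", OF k _ a(3,4) a(1)] a(2) by auto
  have "{i1, i2} \<subseteq> turns z c" "i1 \<noteq> i2"
    using i1 i2 by (auto simp: turns_def)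
  then show ?thesis
    using card_mono[of "turns z c" "{i1, i2}"] by (simp add: turns_def)
qed

lemma first_switch_in_turns:
  assumes "a < b" "b < k" "dir z c a \<noteq> s" "dir z c b = s"
  shows "\<exists>j. a < j \<and> j \<le> b \<and> j \<in> turns z c \<and> dir z c j = s"
  using assms
proof (induction b)
  case (Suc b)
  show ?case
  proof (cases "dir z c b = s")
    case True
    then have "a < b"
      using Suc.prems(1,3) less_Suc_eq by auto
    then show ?thesis
      using Suc.IH Suc.prems True by (metis Suc_lessD le_Suc_eq)
  next
    case False
    then have "Suc b \<in> turns z c"
      using Suc.prems by (intro in_turnsI) auto
    then show ?thesis
      using Suc.prems by blast
  qed
qed simp

lemma two_monotone_runs:
  assumes first: "dir z c 0 = 1" and last: "dir z c (k - 1) = -1" and few: "card (turns z c) \<le> 3"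
  obtains t where "0 < t" "t < k" "\<And>i. i < t \<Longrightarrow> dir z c i = 1"
    "\<And>i. t \<le> i \<Longrightarrow> i < k \<Longrightarrow> dir z c i = -1"
proof -
  define t where "t = (LEAST i. dir z c i = -1)"
  have t: "dir z c t = -1" "t \<le> k - 1"
    unfolding t_def using last by (auto intro: LeastI Least_le)
  have before: "dir z c i = 1" if "i < t" for i
    using not_less_Least[of i "\<lambda>i. dir z c i = -1"] that dir_cases[of z c i] by (auto simp: t_def)
  have "0 < t"
    using t first by (cases t) auto
  moreover have "dir z c i = -1" if i: "t \<le> i" "i < k" for i
  proof (rule ccontr)
    assume "dir z c i \<noteq> -1"
    then have "dir z c i = 1" "t < i"
      using dir_cases[of z c i] t i by (auto simp: le_less)
    then obtain j1 where j1: "t < j1" "j1 \<le> i" "j1 \<in> turns z c" "dir z c j1 = 1"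
      using first_switch_in_turns[of t i 1] t i by auto
    moreover have "j1 \<noteq> k - 1"
      using j1(4) last by auto
    ultimately have "j1 < k - 1"
      using i(2) by linarith
    then obtain j2 where j2: "j1 < j2" "j2 \<in> turns z c"
      using first_switch_in_turns[of j1 "k - 1" "-1"] j1 last length_pos by auto
    have "0 \<in> turns z c"
      using first last length_pos by (simp add: turns_def)
    moreover have "t \<in> turns z c"
      using \<open>0 < t\<close> t before[of "t - 1"] length_ge_3 by (intro in_turnsI) auto
    ultimately have "{0, t, j1, j2} \<subseteq> turns z c"
      using j1 j2 by auto
    moreover have "card {0, t, j1, j2} = 4"
      using \<open>0 < t\<close> j1 j2 by auto
    ultimately show False
      using few card_mono[of "turns z c" "{0, t, j1, j2}"] by (simp add: turns_def)
  qed
  moreover have "t < k"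
    using t(2) length_pos by linarith
  ultimately show ?thesis
    using that before by blast
qed

end

lemma tight_cycleI:
  assumes "is_cycle n Ed c" "\<forall>i<n. r i > 0"
    and "\<And>i j. {i, j} \<in> Ed \<Longrightarrow> \<bar>z i - z j\<bar> = r i + r j"
  shows "tight_cycle n r z c"
  using assms is_cycle_edge[OF assms(1)] by unfold_locales (auto simp: is_cycle_def)

lemma tight_cycle_edges_x:
  "homothetic_packing n r x y \<Longrightarrow> is_cycle n (edges_x n r x y) c \<Longrightarrow> tight_cycle n r x c"
  by (rule tight_cycleI) (auto simp: homothetic_packing_iff edges_x_iff)

lemma tight_cycle_edges_y:
  "homothetic_packing n r x y \<Longrightarrow> is_cycle n Ed c \<Longrightarrow> Ed \<subseteq> edges_y n r x y \<Longrightarrow> tight_cycle n r y c"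
  by (rule tight_cycleI) (auto simp: homothetic_packing_iff edges_y_iff)

section \<open>Cycles that run right and back\<close>

lemma touching_intervals:
  fixes a b ra rb :: real
  assumes "ra + rb = \<bar>a - b\<bar>"
  shows "a + ra = b - rb \<or> b + rb = a - ra"
  using assms by (auto simp: abs_if split: if_splits)

lemma (in tight_cycle) no_alternating_with_strict_overlaps:
  assumes packing: "homothetic_packing n r x z"
    and alternating: "\<And>i. dir z c (Suc i) = - dir z c i"
    and overlap: "\<And>i. \<bar>x (w i) - x (w (Suc i))\<bar> < r (w i) + r (w (Suc i))"
  shows False
proof -
  txt \<open>The square whose left side is rightmost: its two neighbours are on the same side in \<open>z\<close>,
    hence separated in \<open>x\<close>, but both reach past that left side.\<close>
  define M where "M = Max ((\<lambda>i. x (w i) - r (w i)) ` {..<k})"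
  have "M \<in> (\<lambda>i. x (w i) - r (w i)) ` {..<k}"
    unfolding M_def using length_pos by (intro Max_in) auto
  then obtain m where m: "x (w m) - r (w m) = M"
    by auto
  have le_M: "x (w i) - r (w i) \<le> M" for i
  proof -
    have "x (w (i mod k)) - r (w (i mod k)) \<le> M"
      unfolding M_def using length_pos by (intro Max_ge) (auto simp del: cyc_nth_mod)
    then show ?thesis
      by simp
  qed
  define u where "u = w (m + k - 1)"
  define v where "v = w (Suc m)"
  have "w (Suc m + (k - 2)) \<noteq> w (Suc m)"
    using length_ge_3 by (intro w_shift_neq) auto
  moreover have "Suc m + (k - 2) = m + k - 1"
    using length_ge_3 by simp
  ultimately have "v \<noteq> u"
    unfolding u_def v_def by metis
  have "dir z c (m + k - 1) = - dir z c m"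
    using alternating[of "m + k - 1"] dir_prev_Suc[of m] by simp
  then have "z v - z u = of_int (dir z c m) * (r v - r u)"
    using step[of m] step[of "m + k - 1"] w_prev[of m] by (simp add: u_def v_def algebra_simps)
  then have "\<bar>z v - z u\<bar> < r v + r u"
    using dir_cases[of z c m] radius_w_pos[of "Suc m"] radius_w_pos[of "m + k - 1"]
    by (auto simp: u_def v_def abs_if)
  then have separated: "r v + r u \<le> \<bar>x v - x u\<bar>"
    using packing_separated[OF packing w_less w_less \<open>v \<noteq> u\<close>[unfolded u_def v_def]]
    by (simp add: u_def v_def)
  have "M < x v + r v" "M < x u + r u"
    using overlap[of m] overlap[of "m + k - 1"] w_prev[of m] m
    by (auto simp: u_def v_def abs_less_iff)
  moreover have "x v - r v \<le> M" "x u - r u \<le> M"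
    using le_M by (simp_all add: u_def v_def)
  ultimately show False
    using separated by (simp add: abs_le_iff)
qed

text \<open>The left ends of the squares on the
  rising and on the falling run are \<open>base + 2 * up_sum\<close> and \<open>base + 2 * down_sum\<close> of the radii
  passed so far; they meet only at the two ends.\<close>

locale two_runs =
  fixes n :: nat and r x y :: "nat \<Rightarrow> real" and c :: "nat list" and t :: nat
  assumes packing: "homothetic_packing n r x y"
    and generic: "weak_generic n r"
    and x_cycle: "is_cycle n (edges_x n r x y) c"
    and almost_spanning: "n \<le> length c + 1"
    and five_le_n: "5 \<le> n"
    and t_pos: "0 < t" and t_less: "t < length c"
    and rising: "\<And>i. i < t \<Longrightarrow> dir x c i = 1"
    and falling: "\<And>i. t \<le> i \<Longrightarrow> i < length c \<Longrightarrow> dir x c i = -1"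

sublocale two_runs \<subseteq> tight_cycle n r x c
  using tight_cycle_edges_x[OF packing x_cycle] .

context two_runs
begin

abbreviation left where "left v \<equiv> x v - r v"
abbreviation right where "right v \<equiv> x v + r v"

definition base where "base = right (w 0)"
definition up_sum where "up_sum m = (\<Sum>l\<in>{1..m}. r (w l))"
definition down_sum where "down_sum m = (\<Sum>l\<in>{k - m..<k}. r (w l))"
definition p where "p = t - 1"
definition q where "q = k - t - 1"

lemma k_le_n: "k \<le> n"
  using is_cycle_length_le[OF x_cycle] .

lemma w_inj: "i < k \<Longrightarrow> j < k \<Longrightarrow> w i = w j \<Longrightarrow> i = j"
  using w_eq_iff by simp

lemma w_k: "w k = w 0"
  using cyc_nth_add_length[of c 0] by simp

lemma rising_step: "i < t \<Longrightarrow> left (w (Suc i)) = right (w i)"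
  using step[of i] rising[of i] by simp

lemma falling_step: "t \<le> i \<Longrightarrow> i < k \<Longrightarrow> right (w (Suc i)) = left (w i)"
  using step[of i] falling[of i] by simp

lemma up_sum_0 [simp]: "up_sum 0 = 0"
  by (simp add: up_sum_def)

lemma down_sum_0 [simp]: "down_sum 0 = 0"
  by (simp add: down_sum_def)

lemma up_sum_Suc: "up_sum (Suc m) = up_sum m + r (w (Suc m))"
  by (simp add: up_sum_def)

lemma down_sum_Suc:
  assumes m: "Suc m \<le> k"
  shows "down_sum (Suc m) = down_sum m + r (w (k - Suc m))"
proof -
  have "{k - Suc m..<k} = insert (k - Suc m) {k - m..<k}" "k - Suc m \<notin> {k - m..<k}"
    using m by auto
  then show ?thesis
    by (simp add: down_sum_def)
qed

lemma up_sum_strict_mono: "i < j \<Longrightarrow> up_sum i < up_sum j"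
proof (induction j)
  case (Suc j)
  then show ?case
    using up_sum_Suc[of j] radius_w_pos[of "Suc j"] by (cases "i = j") auto
qed simp

lemma down_sum_strict_mono: "i < j \<Longrightarrow> j \<le> k \<Longrightarrow> down_sum i < down_sum j"
proof (induction j)
  case (Suc j)
  then show ?case
    using down_sum_Suc[of j] radius_w_pos[of "k - Suc j"] by (cases "i = j") auto
qed simp

lemma up_sum_mono: "i \<le> j \<Longrightarrow> up_sum i \<le> up_sum j"
  using up_sum_strict_mono by (cases "i = j") (auto intro: less_imp_le)

lemma down_sum_mono: "i \<le> j \<Longrightarrow> j \<le> k \<Longrightarrow> down_sum i \<le> down_sum j"
  using down_sum_strict_mono by (cases "i = j") (auto intro: less_imp_le)

lemma up_sum_inj: "up_sum i = up_sum j \<Longrightarrow> i = j"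
  using up_sum_strict_mono by (metis less_irrefl linorder_neqE_nat)

lemma down_sum_inj: "down_sum i = down_sum j \<Longrightarrow> i \<le> k \<Longrightarrow> j \<le> k \<Longrightarrow> i = j"
  using down_sum_strict_mono by (metis less_irrefl linorder_neqE_nat)

lemma up_sum_pos: "0 < i \<Longrightarrow> 0 < up_sum i"
  using up_sum_strict_mono[of 0 i] by simp

lemma down_sum_pos: "0 < i \<Longrightarrow> i \<le> k \<Longrightarrow> 0 < down_sum i"
  using down_sum_strict_mono[of 0 i] by simp

lemma up_sum_nonneg: "0 \<le> up_sum i"
  using up_sum_mono[of 0 i] by simp

lemma down_sum_nonneg: "i \<le> k \<Longrightarrow> 0 \<le> down_sum i"
  using down_sum_mono[of 0 i] by simp

lemma left_rising:
  assumes "1 \<le> l" "l \<le> t"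
  shows "left (w l) = base + 2 * up_sum (l - 1)"
proof -
  have rising_lefts: "Suc d \<le> t \<Longrightarrow> left (w (Suc d)) = base + 2 * up_sum d" for d
  proof (induction d)
    case 0
    then show ?case
      using rising_step[of 0] by (simp add: base_def)
  next
    case (Suc d)
    then have "left (w (Suc (Suc d))) = base + 2 * up_sum d + 2 * r (w (Suc d))"
      using rising_step[of "Suc d"] by simp
    then show ?case
      by (simp add: up_sum_Suc)
  qed
  then show ?thesis
    using assms rising_lefts[of "l - 1"] by simp
qed

lemma left_falling:
  assumes "1 \<le> m" "m \<le> k - t"
  shows "left (w (k - m)) = base + 2 * down_sum (m - 1)"
proof -
  have falling_lefts: "Suc d \<le> k - t \<Longrightarrow> left (w (k - Suc d)) = base + 2 * down_sum d" for d
  proof (induction d)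
    case 0
    have "t \<le> k - 1" "k - 1 < k" "Suc (k - 1) = k"
      using t_less by auto
    then show ?case
      using falling_step[of "k - 1"] w_k by (simp add: base_def)
  next
    case (Suc d)
    let ?i = "k - Suc (Suc d)"
    have "t \<le> ?i" "?i < k" "Suc ?i = k - Suc d"
      using Suc.prems by auto
    then have "left (w ?i) = base + 2 * down_sum d + 2 * r (w (k - Suc d))"
      using falling_step[of ?i] Suc by simp
    then show ?case
      using down_sum_Suc[of d] Suc.prems by simp
  qed
  then show ?thesis
    using assms falling_lefts[of "m - 1"] by simp
qed

lemma up_sum_p_eq_down_sum_q: "up_sum p = down_sum q"
  using left_rising[of t] left_falling[of "k - t"] t_pos t_less by (simp add: p_def q_def)

lemma p_q: "1 \<le> p" "1 \<le> q" "p + q + 2 = k" "t = p + 1"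
proof -
  have "q \<le> k"
    by (simp add: q_def)
  then have pos_iff: "0 < p \<longleftrightarrow> 0 < q"
    using up_sum_p_eq_down_sum_q up_sum_pos[of p] down_sum_pos[of q] by (cases "p = 0"; cases "q = 0") auto
  moreover have "p \<noteq> 0 \<or> q \<noteq> 0"
    using length_ge_3 t_pos t_less by (auto simp: p_def q_def)
  ultimately show "1 \<le> p" "1 \<le> q"
    by auto
  then show "p + q + 2 = k" "t = p + 1"
    by (auto simp: p_def q_def)
qed

lemma sum_r_w_image: "S \<subseteq> {..<k} \<Longrightarrow> (\<Sum>v\<in>w ` S. r v) = (\<Sum>l\<in>S. r (w l))"
  by (rule sum.reindex_cong[of w]) (auto simp: inj_on_def dest: w_inj)

lemma card_w_image: "S \<subseteq> {..<k} \<Longrightarrow> card (w ` S) = card S"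
  by (rule card_image) (auto simp: inj_on_def dest: w_inj)

lemma run_sums_differ:
  assumes "P \<subseteq> {..<k}" "Q \<subseteq> {..<k}" "P \<inter> Q = {}" "P \<noteq> {}" "card P + card Q + 4 \<le> n"
  shows "(\<Sum>l\<in>P. r (w l)) \<noteq> (\<Sum>l\<in>Q. r (w l))"
proof -
  have "w ` P \<inter> w ` Q = {}"
    using assms(1-3) by (auto dest: w_inj)
  moreover have "w ` P \<subseteq> {..<n}" "w ` Q \<subseteq> {..<n}" "w ` P \<union> w ` Q \<noteq> {}"
    using w_less assms(4) by auto
  moreover have "card (w ` P) + card (w ` Q) + 4 \<le> n"
    using card_w_image assms by simp
  ultimately have "(\<Sum>v\<in>w ` P. r v) \<noteq> (\<Sum>v\<in>w ` Q. r v)"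
    using weak_generic_sums_differ[OF generic] by blast
  then show ?thesis
    using sum_r_w_image assms by simp
qed

lemma up_sum_neq_down_sum_inner:
  assumes "0 < i" "i < p" "0 < j" "j < q"
  shows "up_sum i \<noteq> down_sum j"
proof
  assume eq: "up_sum i = down_sum j"
  have pq: "p + q + 2 = k"
    using p_q by simp
  have "i + j + 4 > n"
  proof (rule ccontr)
    assume "\<not> i + j + 4 > n"
    moreover have "{1..i} \<subseteq> {..<k}" "{k - j..<k} \<subseteq> {..<k}" "{1..i} \<inter> {k - j..<k} = {}"
      using assms pq by auto
    ultimately show False
      using run_sums_differ[of "{1..i}" "{k - j..<k}"] eq assms
      by (simp add: up_sum_def down_sum_def)
  qed
  moreover have "(p - i) + (q - j) + 4 > n"
  proof (rule ccontr)
    assume small: "\<not> (p - i) + (q - j) + 4 > n"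
    have "up_sum p = up_sum i + (\<Sum>l\<in>{Suc i..p}. r (w l))"
      unfolding up_sum_def using assms by (subst sum.union_disjoint[symmetric]) (auto intro: sum.cong)
    moreover have "down_sum q = down_sum j + (\<Sum>l\<in>{k - q..<k - j}. r (w l))"
    proof -
      have "{k - q..<k} = {k - j..<k} \<union> {k - q..<k - j}"
        using assms pq by auto
      then show ?thesis
        unfolding down_sum_def by (simp add: sum.union_disjoint)
    qed
    ultimately have "(\<Sum>l\<in>{Suc i..p}. r (w l)) = (\<Sum>l\<in>{k - q..<k - j}. r (w l))"
      using eq up_sum_p_eq_down_sum_q by simp
    moreover have "{Suc i..p} \<subseteq> {..<k}" "{k - q..<k - j} \<subseteq> {..<k}" "{Suc i..p} \<inter> {k - q..<k - j} = {}"
      using assms pq by auto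
    ultimately show False
      using run_sums_differ[of "{Suc i..p}" "{k - q..<k - j}"] small assms by simp
  qed
  ultimately show False
    using pq k_le_n almost_spanning five_le_n assms by linarith
qed

lemma up_sum_eq_down_sum:
  assumes eq: "up_sum i = down_sum j" and ij: "i \<le> p" "j \<le> q"
  shows "(i = 0 \<and> j = 0) \<or> (i = p \<and> j = q)"
proof -
  have "q \<le> k"
    using p_q by simp
  then have j_le: "j \<le> k"
    using ij by simp
  show ?thesis
  proof (cases "i = 0")
    case True
    then have "down_sum j = 0"
      using eq by simp
    then have "j = 0"
      using down_sum_pos[OF _ j_le] by (metis less_irrefl not_gr0)
    then show ?thesis
      using True by simp
  next
    case i0: False
    show ?thesis
    proof (cases "i = p")
      case True
      then have "down_sum j = down_sum q"
        using eq up_sum_p_eq_down_sum_q by simp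
      then show ?thesis
        using True down_sum_inj j_le \<open>q \<le> k\<close> by blast
    next
      case ip: False
      show ?thesis
      proof (cases "j = 0")
        case True
        then show ?thesis
          using eq up_sum_pos[of i] i0 by simp
      next
        case j0: False
        show ?thesis
        proof (cases "j = q")
          case True
          then show ?thesis
            using eq up_sum_p_eq_down_sum_q up_sum_inj ip by simp
        next
          case False
          then show ?thesis
            using up_sum_neq_down_sum_inner[of i j] eq i0 ip j0 ij by simp
        qed
      qed
    qed
  qed
qed

abbreviation peak where "peak \<equiv> base + 2 * up_sum p"

lemma left_w0_less: "left (w 0) < base"
  using radius_w_pos[of 0] by (simp add: base_def)

lemma right_w0: "right (w 0) = base"
  by (simp add: base_def)

lemma left_falling_index:
  assumes l: "t + 1 \<le> l" "l < k"
  shows "left (w l) = base + 2 * down_sum (k - l - 1)"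
proof -
  have "left (w (k - (k - l))) = base + 2 * down_sum (k - l - 1)"
    using left_falling[of "k - l"] l by simp
  moreover have "k - (k - l) = l"
    using l by simp
  ultimately show ?thesis
    by simp
qed

lemma right_rising:
  assumes l: "1 \<le> l" "l \<le> p"
  shows "right (w l) = base + 2 * up_sum l"
proof -
  have "left (w l) = base + 2 * up_sum (l - 1)"
    using left_rising[of l] l p_q(4) by simp
  moreover have "up_sum l = up_sum (l - 1) + r (w l)"
    using up_sum_Suc[of "l - 1"] l by simp
  ultimately show ?thesis
    by simp
qed

lemma right_falling:
  assumes l: "t + 1 \<le> l" "l < k"
  shows "right (w l) = base + 2 * down_sum (k - l)"
proof -
  have "down_sum (Suc (k - l - 1)) = down_sum (k - l - 1) + r (w (k - Suc (k - l - 1)))"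
    using down_sum_Suc[of "k - l - 1"] l by simp
  moreover have "Suc (k - l - 1) = k - l" "k - Suc (k - l - 1) = l"
    using l by auto
  ultimately have "down_sum (k - l) = down_sum (k - l - 1) + r (w l)"
    by simp
  then show ?thesis
    using left_falling_index[OF l] by simp
qed

lemma left_wt: "left (w t) = peak"
  using left_rising[of t] t_pos by (simp add: p_def)

lemma right_wt_greater: "right (w t) > peak"
  using left_wt radius_w_pos[of t] by simp

lemma base_le_left:
  assumes l: "l < k" "l \<noteq> 0"
  shows "left (w l) \<ge> base"
proof -
  from l consider "1 \<le> l \<and> l \<le> t" | "t + 1 \<le> l \<and> l < k"
    by linarith
  then show ?thesis
  proof cases
    case 1
    then show ?thesis
      using left_rising[of l] up_sum_nonneg by simp
  next
    case 2
    then show ?thesis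
      using left_falling_index[of l] down_sum_nonneg[of "k - l - 1"] by simp
  qed
qed

lemma left_le_peak:
  assumes l: "l < k"
  shows "left (w l) \<le> peak"
proof -
  from l consider "l = 0" | "1 \<le> l \<and> l \<le> t" | "t + 1 \<le> l \<and> l < k"
    by linarith
  then show ?thesis
  proof cases
    case 1
    then show ?thesis
      using left_w0_less up_sum_nonneg[of p] by simp
  next
    case 2
    then have "l - 1 \<le> p"
      using p_q(4) by linarith
    then show ?thesis
      using left_rising[of l] up_sum_mono[of "l - 1" p] 2 by simp
  next
    case 3
    have "down_sum (k - l - 1) \<le> down_sum q"
      using 3 p_q by (intro down_sum_mono) (auto simp: q_def)
    then show ?thesis
      using left_falling_index[of l] 3 up_sum_p_eq_down_sum_q[symmetric] by simp
  qed
qed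

lemma base_le_right:
  assumes l: "l < k"
  shows "right (w l) \<ge> base"
proof -
  from l consider "l = 0" | "1 \<le> l \<and> l \<le> p" | "l = t" | "t + 1 \<le> l \<and> l < k"
    using p_q(4) by linarith
  then show ?thesis
  proof cases
    case 1
    then show ?thesis
      using right_w0 by simp
  next
    case 2
    then show ?thesis
      using right_rising[of l] up_sum_nonneg by simp
  next
    case 3
    then show ?thesis
      using right_wt_greater up_sum_nonneg[of p] by simp
  next
    case 4
    then show ?thesis
      using right_falling[of l] down_sum_nonneg[of "k - l"] by simp
  qed
qed

lemma right_le_peak:
  assumes l: "l < k" "l \<noteq> t"
  shows "right (w l) \<le> peak"
proof -
  from l consider "l = 0" | "1 \<le> l \<and> l \<le> p" | "t + 1 \<le> l \<and> l < k"
    using p_q(4) by linarith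
  then show ?thesis
  proof cases
    case 1
    then show ?thesis
      using right_w0 up_sum_nonneg by simp
  next
    case 2
    then show ?thesis
      using right_rising[of l] up_sum_mono[of l p] by simp
  next
    case 3
    have "down_sum (k - l) \<le> down_sum q"
      using 3 p_q by (intro down_sum_mono) (auto simp: q_def)
    then show ?thesis
      using right_falling[of l] 3 up_sum_p_eq_down_sum_q[symmetric] by simp
  qed
qed

lemma right_eq_base_imp: "l < k \<Longrightarrow> right (w l) = base \<Longrightarrow> l = 0"
proof (rule ccontr)
  assume l: "l < k" "right (w l) = base" "l \<noteq> 0"
  then consider "1 \<le> l \<and> l \<le> p" | "l = t" | "t + 1 \<le> l \<and> l < k"
    using p_q(4) by linarith
  then show False
  proof cases
    case 1
    then show ?thesis
      using right_rising[of l] up_sum_pos[of l] l by simp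
  next
    case 2
    then show ?thesis
      using right_wt_greater up_sum_nonneg[of p] l by simp
  next
    case 3
    then show ?thesis
      using right_falling[of l] down_sum_pos[of "k - l"] l by simp
  qed
qed

definition cycle_edges where "cycle_edges = (\<lambda>j. {w j, w (Suc j)}) ` {..<k}"

lemma finite_cycle_edges: "finite cycle_edges"
  by (simp add: cycle_edges_def)

lemma card_cycle_edges_le: "card cycle_edges \<le> k"
  unfolding cycle_edges_def using card_image_le[of "{..<k}"] by simp

lemma cycle_edgeI: "j < k \<Longrightarrow> {w j, w (Suc j)} \<in> cycle_edges"
  unfolding cycle_edges_def by blast

lemma touching_w0:
  assumes l': "l' < k" and touch: "right (w 0) = left (w l')"
  shows "{w 0, w l'} \<in> cycle_edges"
proof -
  have "l' \<noteq> 0"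
  proof
    assume "l' = 0"
    then show False
      using touch left_w0_less right_w0 by simp
  qed
  then consider "1 \<le> l'" "l' \<le> t" | "t + 1 \<le> l'"
    by linarith
  then show ?thesis
  proof cases
    case 1
    then have "up_sum (l' - 1) = up_sum 0"
      using left_rising[of l'] touch right_w0 by simp
    then have "l' = 1"
      using up_sum_inj 1 by fastforce
    then show ?thesis
      using cycle_edgeI[of 0] length_pos by simp
  next
    case 2
    then have "down_sum (k - l' - 1) = down_sum 0"
      using left_falling_index[of l'] l' touch right_w0 by simp
    then have "Suc l' = k"
      using down_sum_inj[of "k - l' - 1" 0] l' by simp
    then show ?thesis
      using cycle_edgeI[of l'] l' w_k by (simp add: insert_commute)
  qed
qed

lemma touching_rising:
  assumes l: "1 \<le> l" "l \<le> p" and l': "l' < k" and touch: "right (w l) = left (w l')"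
  shows "{w l, w l'} \<in> cycle_edges"
proof -
  have p_q: "p + q + 2 = k" "t = p + 1"
    using p_q by auto
  have "l' \<noteq> 0"
  proof
    assume "l' = 0"
    then show False
      using touch left_w0_less base_le_right[of l] l p_q by simp
  qed
  then consider "1 \<le> l'" "l' \<le> t" | "t + 1 \<le> l'"
    by linarith
  then show ?thesis
  proof cases
    case 1
    then have "up_sum (l' - 1) = up_sum l"
      using left_rising[of l'] right_rising[OF l] touch by simp
    then have "l' = Suc l"
      using up_sum_inj 1 by fastforce
    then show ?thesis
      using cycle_edgeI[of l] l p_q by simp
  next
    case 2
    then have "up_sum l = down_sum (k - l' - 1)" "k - l' - 1 \<le> q"
      using left_falling_index[of l'] right_rising[OF l] touch l' p_q by (simp_all add: q_def)
    then show ?thesis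
      using up_sum_eq_down_sum[of l "k - l' - 1"] l l' 2 p_q by (auto simp: q_def)
  qed
qed

lemma touching_falling:
  assumes l: "t + 1 \<le> l" "l < k" and l': "l' < k" and touch: "right (w l) = left (w l')"
  shows "{w l, w l'} \<in> cycle_edges"
proof -
  have p_q: "p + q + 2 = k" "t = p + 1"
    using p_q by auto
  have "l' \<noteq> 0"
  proof
    assume "l' = 0"
    then show False
      using touch left_w0_less base_le_right[of l] l by simp
  qed
  then consider "1 \<le> l'" "l' \<le> t" | "t + 1 \<le> l'"
    by linarith
  then show ?thesis
  proof cases
    case 1
    then have "up_sum (l' - 1) = down_sum (k - l)" "l' - 1 \<le> p" "k - l \<le> q"
      using left_rising[of l'] right_falling[OF l] touch l p_q by (auto simp: q_def)
    then have "l' = t" "l = t + 1"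
      using up_sum_eq_down_sum[of "l' - 1" "k - l"] l 1 p_q by (auto simp: q_def)
    then show ?thesis
      using cycle_edgeI[of t] t_less by (simp add: insert_commute)
  next
    case 2
    then have "down_sum (k - l' - 1) = down_sum (k - l)"
      using left_falling_index[of l'] right_falling[OF l] touch l' by simp
    then have "l = Suc l'"
      using down_sum_inj l l' 2 by fastforce
    then show ?thesis
      using cycle_edgeI[of l'] l' by (simp add: insert_commute)
  qed
qed

lemma right_eq_left_imp_cycle_edge:
  assumes l: "l < k" and l': "l' < k" and touch: "right (w l) = left (w l')"
  shows "{w l, w l'} \<in> cycle_edges"
proof -
  have "l \<noteq> t"
    using touch right_wt_greater left_le_peak[OF l'] by auto
  then consider "l = 0" | "1 \<le> l" "l \<le> p" | "t + 1 \<le> l"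
    using p_q(4) by linarith
  then show ?thesis
    by cases (use touching_w0 touching_rising touching_falling assms in auto)
qed

lemma right_eq_right_imp:
  assumes l: "l < k" and l': "l' < k" and ll: "l < l'" and eq: "right (w l) = right (w l')"
  shows "l = p \<and> l' = t + 1"
proof -
  have pq: "p + q + 2 = k" "t = p + 1"
    using p_q p_q(4) by auto
  have l0: "l \<noteq> 0"
  proof
    assume "l = 0"
    then have "right (w l') = base"
      using eq right_w0 by simp
    then show False
      using right_eq_base_imp[OF l'] ll \<open>l = 0\<close> by simp
  qed
  have lt: "l \<noteq> t"
  proof
    assume "l = t"
    then show False
      using right_wt_greater right_le_peak[OF l'] eq ll by simp
  qed
  have l't: "l' \<noteq> t"
  proof
    assume "l' = t"
    then show False
      using right_wt_greater right_le_peak[OF l] eq ll by simp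
  qed
  consider (f) "1 \<le> l" "l \<le> p" | (g) "t + 1 \<le> l" "l < k"
    using l l0 lt pq by linarith
  then show ?thesis
  proof cases
    case f
    consider (ff) "1 \<le> l'" "l' \<le> p" | (gg) "t + 1 \<le> l'" "l' < k"
      using l' ll l't pq f by linarith
    then show ?thesis
    proof cases
      case ff
      then have "up_sum l = up_sum l'"
        using right_rising f eq by simp
      then show ?thesis
        using up_sum_inj[of l l'] ll by simp
    next
      case gg
      then have "up_sum l = down_sum (k - l')"
        using right_rising[of l] right_falling[of l'] f eq by simp
      moreover have "k - l' \<le> q"
        using gg pq by (simp add: q_def)
      ultimately have "(l = 0 \<and> k - l' = 0) \<or> (l = p \<and> k - l' = q)"
        using up_sum_eq_down_sum[of l "k - l'"] f by simp
      then show ?thesis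
        using f gg pq by (auto simp: q_def)
    qed
  next
    case g
    then have gg: "t + 1 \<le> l'" "l' < k"
      using ll l' by auto
    then have "down_sum (k - l) = down_sum (k - l')"
      using right_falling[of l] right_falling[of l'] g eq by simp
    then show ?thesis
      using down_sum_inj[of "k - l" "k - l'"] g gg ll by simp
  qed
qed

lemma left_eq_left_imp:
  assumes l: "l < k" and l': "l' < k" and ll: "l < l'" and eq: "left (w l) = left (w l')"
  shows "l = 1 \<and> l' = k - 1"
proof -
  have pq: "p + q + 2 = k" "t = p + 1"
    using p_q p_q(4) by auto
  have l0: "l \<noteq> 0"
  proof
    assume "l = 0"
    then show False
      using left_w0_less base_le_left[OF l'] eq ll by simp
  qed
  consider (f) "1 \<le> l" "l \<le> t" | (g) "t + 1 \<le> l" "l < k"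
    using l l0 pq by linarith
  then show ?thesis
  proof cases
    case f
    consider (ff) "1 \<le> l'" "l' \<le> t" | (gg) "t + 1 \<le> l'" "l' < k"
      using l' ll pq f by linarith
    then show ?thesis
    proof cases
      case ff
      then have "up_sum (l - 1) = up_sum (l' - 1)"
        using left_rising[of l] left_rising[of l'] f eq by simp
      then have "l - 1 = l' - 1"
        using up_sum_inj by blast
      then show ?thesis
        using f ff ll by simp
    next
      case gg
      then have "up_sum (l - 1) = down_sum (k - l' - 1)"
        using left_rising[of l] left_falling_index[of l'] f eq by simp
      moreover have "k - l' - 1 \<le> q" "l - 1 \<le> p"
        using gg f pq by (auto simp: q_def)
      ultimately have "(l - 1 = 0 \<and> k - l' - 1 = 0) \<or> (l - 1 = p \<and> k - l' - 1 = q)"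
        using up_sum_eq_down_sum[of "l - 1" "k - l' - 1"] by simp
      then show ?thesis
        using f gg pq by (auto simp: q_def)
    qed
  next
    case g
    then have gg: "t + 1 \<le> l'" "l' < k"
      using ll l' by auto
    then have "down_sum (k - l - 1) = down_sum (k - l' - 1)"
      using left_falling_index[of l] left_falling_index[of l'] g eq by simp
    then show ?thesis
      using down_sum_inj[of "k - l - 1" "k - l' - 1"] g gg ll by simp
  qed
qed

definition y_only where "y_only = edges_y n r x y - edges_x n r x y"

lemma y_only_subset: "y_only \<subseteq> edges_y n r x y"
  by (auto simp: y_only_def)

lemma y_only_edge:
  assumes "{u, v} \<in> y_only"
  shows "u < n" "v < n" "u \<noteq> v" "\<bar>x u - x v\<bar> < r u + r v"
proof -
  have contact: "{u, v} \<in> contact_edges n r x y" "r u + r v = \<bar>y u - y v\<bar>" "\<bar>x u - x v\<bar> \<le> \<bar>y u - y v\<bar>"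
    and "{u, v} \<notin> edges_x n r x y"
    using assms by (auto simp: y_only_def edges_y_iff)
  then have "\<bar>x u - x v\<bar> \<noteq> r u + r v"
    by (auto simp: edges_x_iff)
  moreover have "\<forall>i<n. r i > 0"
    using radius_pos by blast
  ultimately show "u < n" "v < n" "u \<noteq> v" "\<bar>x u - x v\<bar> < r u + r v"
    using contact contact_edges_iff by auto
qed

lemma y_only_edgeE:
  assumes "e \<in> y_only"
  obtains u v where "e = {u, v}" "u < n" "v < n" "u \<noteq> v"
  using assms edges_y_subset unfolding y_only_def by (blast elim: contact_edgesE)

lemma y_only_nbr_w0_outside: "{w 0, v} \<in> y_only \<Longrightarrow> v \<notin> set c"
proof
  assume e: "{w 0, v} \<in> y_only" and "v \<in> set c"
  then obtain l where l: "l < k" "v = w l"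
    unfolding in_set_iff_cyc_nth by blast
  have "l \<noteq> 0"
    using y_only_edge(3)[OF e] l(2) by metis
  then show False
    using base_le_left[OF l(1)] y_only_edge(4)[OF e] l by (simp add: base_def abs_less_iff)
qed

lemma y_only_nbr_wt_outside: "{w t, v} \<in> y_only \<Longrightarrow> v \<notin> set c"
proof
  assume e: "{w t, v} \<in> y_only" and "v \<in> set c"
  then obtain l where l: "l < k" "v = w l"
    unfolding in_set_iff_cyc_nth by blast
  have "l \<noteq> t"
    using y_only_edge(3)[OF e] l(2) by metis
  then show False
    using right_le_peak[OF l(1)] y_only_edge(4)[OF e] l left_wt by (simp add: abs_less_iff)
qed

lemma w0_neq_wt: "w 0 \<noteq> w t"
  using w_inj[of 0 t] t_pos t_less nonempty by auto

lemma end_not_on_y_only_cycle: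
  assumes cyc: "is_cycle n y_only c'" and end_nbrs: "\<And>v. {u, v} \<in> y_only \<Longrightarrow> v \<notin> set c"
  shows "u \<notin> set c'"
proof
  assume "u \<in> set c'"
  then obtain v1 v2 where v: "v1 \<noteq> v2" "{u, v1} \<in> y_only" "{u, v2} \<in> y_only"
    using is_cycle_two_neighbours[OF cyc] by blast
  then have "{v1, v2} \<subseteq> {..<n} - set c"
    using end_nbrs y_only_edge by auto
  then have "card {v1, v2} \<le> n - k"
    using card_mono[of "{..<n} - set c"] card_outside by fastforce
  then show False
    using v(1) almost_spanning by simp
qed

lemma no_y_only_cycle: "\<not> is_cycle n y_only c'"
proof
  assume cyc': "is_cycle n y_only c'"
  have "set c' \<subseteq> {..<n} - {w 0, w t}"
    using end_not_on_y_only_cycle[OF cyc' y_only_nbr_w0_outside]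
      end_not_on_y_only_cycle[OF cyc' y_only_nbr_wt_outside] cyc'
    by (auto simp: is_cycle_def)
  then have "card (set c') \<le> card ({..<n} - {w 0, w t})"
    by (intro card_mono) auto
  also have "\<dots> = n - 2"
    using w0_neq_wt w_less by (simp add: card_Diff_subset)
  finally have short: "length c' \<le> n - 2"
    using cyc' by (simp add: is_cycle_def distinct_card)
  interpret y_cycle: tight_cycle n r y c'
    by (rule tight_cycle_edges_y[OF packing cyc' y_only_subset])
  show False
  proof (cases "\<forall>i. dir y c' (Suc i) = - dir y c' i")
    case True
    have "\<bar>x (cyc_nth c' i) - x (cyc_nth c' (Suc i))\<bar> < r (cyc_nth c' i) + r (cyc_nth c' (Suc i))" for i
      using y_only_edge(4)[OF is_cycle_edge[OF cyc']] .
    then show False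
      using y_cycle.no_alternating_with_strict_overlaps[OF packing] True by blast
  next
    case False
    then have "n - length c' + card (turns y c') \<le> 3"
      using y_cycle.alternating_or_few_turns[OF generic] by blast
    then show False
      using y_cycle.two_le_card_turns short five_le_n by linarith
  qed
qed

lemma card_y_only_avoiding:
  assumes S: "S \<subseteq> {..<n}" "card S < n" and H: "H \<subseteq> y_only" "\<And>e. e \<in> H \<Longrightarrow> e \<inter> S = {}"
  shows "card H < n - card S"
proof -
  let ?W = "{..<n} - S"
  have card_W: "card ?W = n - card S"
    using S by (simp add: card_Diff_subset finite_subset)
  have "edges_within ?W H"
    unfolding edges_within_def
  proof
    fix e assume e: "e \<in> H"
    then obtain u v where "e = {u, v}" "u < n" "v < n" "u \<noteq> v"
      using H(1) by (blast elim: y_only_edgeE)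
    then show "\<exists>u v. e = {u, v} \<and> u \<noteq> v \<and> u \<in> ?W \<and> v \<in> ?W"
      using H(2)[OF e] by blast
  qed
  moreover have "\<nexists>c. is_cycle n H c"
    using no_y_only_cycle is_cycle_mono H(1) by blast
  moreover have "?W \<noteq> {}"
  proof
    assume "?W = {}"
    then have "card ?W = 0"
      by (simp only: card.empty)
    then show False
      using card_W S(2) by linarith
  qed
  ultimately show ?thesis
    using card_edges_less_if_acyclic[of ?W n H] card_W by simp
qed

lemma x_edge_within_cycle:
  assumes e: "{u, v} \<in> edges_x n r x y" and "u \<in> set c" "v \<in> set c"
  shows "{u, v} \<in> cycle_edges"
proof -
  obtain l l' where l: "l < k" "u = w l" and l': "l' < k" "v = w l'"
    using assms(2,3) unfolding in_set_iff_cyc_nth by blast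
  have "r u + r v = \<bar>x u - x v\<bar>"
    using e by (simp add: edges_x_iff)
  then have "right u = left v \<or> right v = left u"
    by (rule touching_intervals)
  then show ?thesis
    using right_eq_left_imp_cycle_edge[OF l(1) l'(1)] right_eq_left_imp_cycle_edge[OF l'(1) l(1)] l l'
    by (auto simp: insert_commute)
qed

lemma finite_edges_x: "finite (edges_x n r x y)"
  using finite_subset[OF edges_x_subset finite_contact_edges] .

lemma finite_y_only: "finite y_only"
  using finite_subset[OF _ finite_contact_edges] y_only_subset edges_y_subset by blast

lemma card_contact_edges_le: "card (contact_edges n r x y) \<le> card (edges_x n r x y) + card y_only"
proof -
  have "contact_edges n r x y \<subseteq> edges_x n r x y \<union> y_only"
    using contact_edges_subset_edges_x_Un_edges_y[OF packing] unfolding y_only_def by blast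
  then have "card (contact_edges n r x y) \<le> card (edges_x n r x y \<union> y_only)"
    using finite_edges_x finite_y_only by (intro card_mono) simp_all
  also have "\<dots> \<le> card (edges_x n r x y) + card y_only"
    by (rule card_Un_le)
  finally show ?thesis .
qed

lemma y_only_edge_at_end:
  assumes "e \<in> y_only" "u \<in> e" and end_nbrs: "\<And>v. {u, v} \<in> y_only \<Longrightarrow> v \<notin> set c"
  obtains v where "e = {u, v}" "v < n" "v \<notin> set c"
proof -
  obtain a b where ab: "e = {a, b}" "a < n" "b < n"
    using assms(1) by (blast elim: y_only_edgeE)
  then obtain v where "e = {u, v}" "v < n"
    using assms(2) by (auto simp: insert_commute)
  then show ?thesis
    using that end_nbrs assms(1) by blast
qed

lemma count_spanning:
  assumes "k = n"
  shows "card (contact_edges n r x y) \<le> 2 * n - 2"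
proof -
  have "card (set c) = card {..<n}"
    using distinct_card[OF distinct] assms by simp
  then have spanning: "set c = {..<n}"
    using set_subset by (simp add: card_subset_eq)
  have "edges_x n r x y \<subseteq> cycle_edges"
  proof
    fix e assume e: "e \<in> edges_x n r x y"
    then obtain u v where uv: "e = {u, v}" "u < n" "v < n"
      using edges_x_subset by (blast elim: contact_edgesE)
    then have "u \<in> set c" "v \<in> set c"
      using spanning by simp_all
    then show "e \<in> cycle_edges"
      using x_edge_within_cycle[of u v] e uv(1) by simp
  qed
  then have "card (edges_x n r x y) \<le> card cycle_edges"
    by (rule card_mono[OF finite_cycle_edges])
  then have "card (edges_x n r x y) \<le> n"
    using card_cycle_edges_le assms by linarith
  moreover have "e \<inter> {w 0, w t} = {}" if e: "e \<in> y_only" for e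
  proof -
    have "u \<notin> e" if nbrs: "\<And>v. {u, v} \<in> y_only \<Longrightarrow> v \<notin> set c" for u
    proof
      assume "u \<in> e"
      then obtain v where "v < n" "v \<notin> set c"
        using y_only_edge_at_end[OF e _ nbrs] by blast
      then show False
        using spanning by blast
    qed
    then show ?thesis
      using y_only_nbr_w0_outside y_only_nbr_wt_outside by blast
  qed
  then have "card y_only < n - 2"
    using card_y_only_avoiding[of "{w 0, w t}" y_only] w0_neq_wt w_less five_le_n by simp
  ultimately show ?thesis
    using card_contact_edges_le by linarith
qed

end

locale two_runs_one_extra = two_runs +
  fixes X :: nat
  assumes outside: "{..<n} - set c = {X}"
begin

lemma X_less: "X < n" and X_notin: "X \<notin> set c"
  using outside by auto

lemma outside_eq_X: "v < n \<Longrightarrow> v \<notin> set c \<Longrightarrow> v = X"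
  using outside by auto

lemma k_eq: "k + 1 = n"
  using card_outside outside k_le_n by simp

definition x_nbrs where "x_nbrs = {v \<in> set c. {X, v} \<in> edges_x n r x y}"
definition touch_left where "touch_left = {v \<in> set c. right v = left X}"
definition touch_right where "touch_right = {v \<in> set c. left v = right X}"

lemma finite_x_nbrs: "finite x_nbrs"
  by (simp add: x_nbrs_def)

lemma card_edges_x_le: "card (edges_x n r x y) \<le> k + card x_nbrs"
proof -
  have "edges_x n r x y \<subseteq> cycle_edges \<union> (\<lambda>v. {X, v}) ` x_nbrs"
  proof
    fix e assume e: "e \<in> edges_x n r x y"
    then obtain u v where uv: "e = {u, v}" "u < n" "v < n" "u \<noteq> v"
      using edges_x_subset by (blast elim: contact_edgesE)
    consider "u \<in> set c" "v \<in> set c" | "u = X" "v \<in> set c" | "v = X" "u \<in> set c"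
      using uv outside_eq_X by blast
    then show "e \<in> cycle_edges \<union> (\<lambda>v. {X, v}) ` x_nbrs"
      by cases (use x_edge_within_cycle e uv in \<open>auto simp: x_nbrs_def insert_commute\<close>)
  qed
  then have "card (edges_x n r x y) \<le> card (cycle_edges \<union> (\<lambda>v. {X, v}) ` x_nbrs)"
    using finite_cycle_edges finite_x_nbrs by (intro card_mono) auto
  also have "\<dots> \<le> card cycle_edges + card ((\<lambda>v. {X, v}) ` x_nbrs)"
    by (rule card_Un_le)
  also have "\<dots> \<le> k + card x_nbrs"
    using card_cycle_edges_le card_image_le[OF finite_x_nbrs] by (intro add_mono) auto
  finally show ?thesis .
qed

lemma x_nbrs_subset: "x_nbrs \<subseteq> touch_left \<union> touch_right"
proof
  fix v assume v: "v \<in> x_nbrs"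
  then have "r X + r v = \<bar>x X - x v\<bar>" "v \<in> set c"
    by (auto simp: x_nbrs_def edges_x_iff)
  then have "right X = left v \<or> right v = left X"
    by (intro touching_intervals) simp
  then show "v \<in> touch_left \<union> touch_right"
    using \<open>v \<in> set c\<close> by (auto simp: touch_left_def touch_right_def)
qed

lemma touch_left_pair:
  assumes "v1 \<in> touch_left" "v2 \<in> touch_left" "v1 \<noteq> v2"
  shows "v1 \<in> {w p, w (t + 1)}" "left X = peak"
proof -
  obtain l1 l2 where l: "l1 < k" "v1 = w l1" "l2 < k" "v2 = w l2"
    using assms(1,2) unfolding touch_left_def in_set_iff_cyc_nth by blast
  have eq: "right (w l1) = right (w l2)"
    using assms l by (simp add: touch_left_def)
  have "l1 \<noteq> l2"
    using assms(3) l by auto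
  then have "(l1 = p \<and> l2 = t + 1) \<or> (l2 = p \<and> l1 = t + 1)"
    using right_eq_right_imp[OF l(1,3) _ eq] right_eq_right_imp[OF l(3,1) _ eq[symmetric]] by linarith
  moreover have "right (w p) = peak"
    using right_rising[of p] p_q by simp
  ultimately show "v1 \<in> {w p, w (t + 1)}" "left X = peak"
    using assms l by (auto simp: touch_left_def)
qed

lemma touch_right_pair:
  assumes "v1 \<in> touch_right" "v2 \<in> touch_right" "v1 \<noteq> v2"
  shows "v1 \<in> {w 1, w (k - 1)}" "right X = base"
proof -
  obtain l1 l2 where l: "l1 < k" "v1 = w l1" "l2 < k" "v2 = w l2"
    using assms(1,2) unfolding touch_right_def in_set_iff_cyc_nth by blast
  have eq: "left (w l1) = left (w l2)"
    using assms l by (simp add: touch_right_def)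
  have "l1 \<noteq> l2"
    using assms(3) l by auto
  then have "(l1 = 1 \<and> l2 = k - 1) \<or> (l2 = 1 \<and> l1 = k - 1)"
    using left_eq_left_imp[OF l(1,3) _ eq] left_eq_left_imp[OF l(3,1) _ eq[symmetric]] by linarith
  moreover have "left (w 1) = base"
    using left_rising[of 1] t_pos by simp
  ultimately show "v1 \<in> {w 1, w (k - 1)}" "right X = base"
    using assms l by (auto simp: touch_right_def)
qed

lemma touch_left_empty: "left X < base \<Longrightarrow> touch_left = {}"
  using base_le_right by (fastforce simp: touch_left_def in_set_iff_cyc_nth)

lemma touch_right_empty: "peak < right X \<Longrightarrow> touch_right = {}"
  using left_le_peak by (fastforce simp: touch_right_def in_set_iff_cyc_nth)

lemma finite_touch: "finite touch_left" "finite touch_right"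
  by (simp_all add: touch_left_def touch_right_def)

lemma touch_left_cases: "card touch_left \<le> 1 \<or> (touch_left \<subseteq> {w p, w (t + 1)} \<and> left X = peak)"
proof (cases "\<exists>v1\<in>touch_left. \<exists>v2\<in>touch_left. v1 \<noteq> v2")
  case True
  then obtain v1 v2 where v: "v1 \<in> touch_left" "v2 \<in> touch_left" "v1 \<noteq> v2"
    by blast
  have "v \<in> {w p, w (t + 1)}" if "v \<in> touch_left" for v
    using touch_left_pair(1)[OF that] v by (cases "v = v1") auto
  then show ?thesis
    using touch_left_pair(2)[OF v] by blast
next
  case False
  then show ?thesis
    using finite_touch(1) by (auto simp: card_le_Suc0_iff_eq)
qed

lemma touch_right_cases: "card touch_right \<le> 1 \<or> (touch_right \<subseteq> {w 1, w (k - 1)} \<and> right X = base)"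
proof (cases "\<exists>v1\<in>touch_right. \<exists>v2\<in>touch_right. v1 \<noteq> v2")
  case True
  then obtain v1 v2 where v: "v1 \<in> touch_right" "v2 \<in> touch_right" "v1 \<noteq> v2"
    by blast
  have "v \<in> {w 1, w (k - 1)}" if "v \<in> touch_right" for v
    using touch_right_pair(1)[OF that] v by (cases "v = v1") auto
  then show ?thesis
    using touch_right_pair(2)[OF v] by blast
next
  case False
  then show ?thesis
    using finite_touch(2) by (auto simp: card_le_Suc0_iff_eq)
qed

lemma card_x_nbrs_le: "card x_nbrs \<le> 2"
proof -
  have card_pair: "card {a, b} \<le> 2" for a b :: nat
    by (cases "a = b") auto
  have "card (touch_left \<union> touch_right) \<le> 2"
    using touch_left_cases touch_right_cases
  proof (elim disjE conjE)
    assume "card touch_left \<le> 1" "card touch_right \<le> 1"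
    then show ?thesis
      using card_Un_le[of touch_left touch_right] by linarith
  next
    assume "touch_left \<subseteq> {w p, w (t + 1)}" "left X = peak"
    then have "touch_left \<union> touch_right \<subseteq> {w p, w (t + 1)}"
      using touch_right_empty radius_pos[OF X_less] by simp
    then show ?thesis
      using card_mono[of "{w p, w (t + 1)}"] card_pair le_trans by blast
  next
    assume "touch_right \<subseteq> {w 1, w (k - 1)}" "right X = base"
    then have "touch_left \<union> touch_right \<subseteq> {w 1, w (k - 1)}"
      using touch_left_empty radius_pos[OF X_less] by simp
    then show ?thesis
      using card_mono[of "{w 1, w (k - 1)}"] card_pair le_trans by blast
  next
    assume "left X = peak" "right X = base"
    then show ?thesis
      using radius_pos[OF X_less] up_sum_nonneg[of p] by simp
  qed
  then show ?thesis
    using card_mono[OF _ x_nbrs_subset] finite_touch le_trans by blast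
qed

lemma right_X_base_if_many_nbrs: "1 < card x_nbrs \<Longrightarrow> touch_left = {} \<Longrightarrow> right X = base"
  using touch_right_cases x_nbrs_subset card_mono[OF finite_touch(2), of x_nbrs] by auto

lemma left_X_peak_if_many_nbrs: "1 < card x_nbrs \<Longrightarrow> touch_right = {} \<Longrightarrow> left X = peak"
  using touch_left_cases x_nbrs_subset card_mono[OF finite_touch(1), of x_nbrs] by auto

lemma y_only_at_w0: "e \<in> y_only \<Longrightarrow> w 0 \<in> e \<Longrightarrow> e = {w 0, X}"
  using y_only_edge_at_end[OF _ _ y_only_nbr_w0_outside] outside_eq_X by metis

lemma y_only_at_wt: "e \<in> y_only \<Longrightarrow> w t \<in> e \<Longrightarrow> e = {w t, X}"
  using y_only_edge_at_end[OF _ _ y_only_nbr_wt_outside] outside_eq_X by metis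

lemma left_X_if_w0_edge: "{w 0, X} \<in> y_only \<Longrightarrow> left X < base"
  using y_only_edge(4) by (fastforce simp: base_def abs_less_iff)

lemma right_X_if_wt_edge: "{w t, X} \<in> y_only \<Longrightarrow> peak < right X"
  using y_only_edge(4) left_wt by (fastforce simp: abs_less_iff)

lemma y_only_at_X:
  assumes "e \<in> y_only" "X \<in> e"
  obtains l where "l < k" "e = {X, w l}" "\<bar>x X - x (w l)\<bar> < r X + r (w l)"
proof -
  obtain u v where uv: "e = {u, v}" "u < n" "v < n" "u \<noteq> v"
    using assms(1) by (blast elim: y_only_edgeE)
  then obtain v' where v': "e = {X, v'}" "v' \<noteq> X" "v' < n"
    using assms(2) by auto
  then obtain l where "l < k" "v' = w l"
    using outside_eq_X unfolding in_set_iff_cyc_nth by blast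
  then show ?thesis
    using that y_only_edge(4) assms(1) v'(1) by blast
qed

lemma y_only_at_X_if_right_base:
  assumes base: "right X = base" and e: "e \<in> y_only" "X \<in> e"
  shows "e = {w 0, X}"
proof -
  obtain l where l: "l < k" "e = {X, w l}" "\<bar>x X - x (w l)\<bar> < r X + r (w l)"
    using y_only_at_X[OF e] by blast
  then have "left (w l) < base"
    using base by (simp add: abs_less_iff)
  then have "l = 0"
    using base_le_left[OF l(1)] by force
  then show ?thesis
    using l(2) by (simp add: insert_commute)
qed

lemma y_only_at_X_if_left_peak:
  assumes peak: "left X = peak" and e: "e \<in> y_only" "X \<in> e"
  shows "e = {w t, X}"
proof -
  obtain l where l: "l < k" "e = {X, w l}" "\<bar>x X - x (w l)\<bar> < r X + r (w l)"
    using y_only_at_X[OF e] by blast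
  then have "peak < right (w l)"
    using peak by (simp add: abs_less_iff)
  then have "l = t"
    using right_le_peak[OF l(1)] by force
  then show ?thesis
    using l(2) by (simp add: insert_commute)
qed

lemma card_y_only_avoiding_ends:
  assumes "S \<subseteq> {w 0, w t, X}" "H \<subseteq> y_only" "\<And>e. e \<in> H \<Longrightarrow> e \<inter> S = {}"
  shows "card H + card S < n"
proof -
  have "card S \<le> card {w 0, w t, X}"
    using assms(1) by (rule card_mono[rotated]) simp
  also have "\<dots> \<le> 3"
    by (simp add: card_insert_le_m1)
  finally have "card S < n"
    using five_le_n by linarith
  moreover have "S \<subseteq> {..<n}"
    using assms(1) w_less X_less by auto
  ultimately show ?thesis
    using card_y_only_avoiding[OF _ _ assms(2,3)] by fastforce
qed

lemma card_ends_X: "card {w 0, w t, X} = 3"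
proof -
  have "X \<noteq> w 0" "X \<noteq> w t"
    using X_notin w_in_set by metis+
  then show ?thesis
    using w0_neq_wt by simp
qed

lemma bound_if_only_w0_edge:
  assumes w0: "{w 0, X} \<in> y_only" and wt: "{w t, X} \<notin> y_only"
  shows "card x_nbrs + card y_only < n"
proof (cases "card x_nbrs \<le> 1")
  case True
  then show ?thesis
    using card_y_only_avoiding_ends[of "{w t}" y_only] y_only_at_wt wt by fastforce
next
  case False
  then have "right X = base"
    using right_X_base_if_many_nbrs touch_left_empty[OF left_X_if_w0_edge[OF w0]] by simp
  then have "e \<inter> {w 0, w t, X} = {}" if "e \<in> y_only - {{w 0, X}}" for e
    using that y_only_at_w0 y_only_at_wt wt y_only_at_X_if_right_base by blast
  then have "card (y_only - {{w 0, X}}) + 3 < n"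
    using card_y_only_avoiding_ends[of "{w 0, w t, X}" "y_only - {{w 0, X}}"] card_ends_X by auto
  then show ?thesis
    using card_x_nbrs_le w0 finite_y_only by (simp add: card_Diff_singleton)
qed

lemma bound_if_only_wt_edge:
  assumes w0: "{w 0, X} \<notin> y_only" and wt: "{w t, X} \<in> y_only"
  shows "card x_nbrs + card y_only < n"
proof (cases "card x_nbrs \<le> 1")
  case True
  then show ?thesis
    using card_y_only_avoiding_ends[of "{w 0}" y_only] y_only_at_w0 w0 by fastforce
next
  case False
  then have "left X = peak"
    using left_X_peak_if_many_nbrs touch_right_empty[OF right_X_if_wt_edge[OF wt]] by simp
  then have "e \<inter> {w 0, w t, X} = {}" if "e \<in> y_only - {{w t, X}}" for e
    using that y_only_at_w0 y_only_at_wt w0 y_only_at_X_if_left_peak by blast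
  then have "card (y_only - {{w t, X}}) + 3 < n"
    using card_y_only_avoiding_ends[of "{w 0, w t, X}" "y_only - {{w t, X}}"] card_ends_X by auto
  then show ?thesis
    using card_x_nbrs_le wt finite_y_only by (simp add: card_Diff_singleton)
qed

lemma x_nbrs_y_only_bound: "card x_nbrs + card y_only < n"
proof (cases "{w 0, X} \<in> y_only"; cases "{w t, X} \<in> y_only")
  assume "{w 0, X} \<in> y_only" "{w t, X} \<in> y_only"
  then have "x_nbrs = {}"
    using x_nbrs_subset touch_left_empty[OF left_X_if_w0_edge] touch_right_empty[OF right_X_if_wt_edge]
    by blast
  then show ?thesis
    using card_y_only_avoiding_ends[of "{}" y_only] by simp
next
  assume "{w 0, X} \<notin> y_only" "{w t, X} \<notin> y_only"
  then have "card y_only + 2 < n"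
    using card_y_only_avoiding_ends[of "{w 0, w t}" y_only] y_only_at_w0 y_only_at_wt w0_neq_wt
    by fastforce
  then show ?thesis
    using card_x_nbrs_le by linarith
qed (use bound_if_only_w0_edge bound_if_only_wt_edge in blast)+

lemma count_one_extra: "card (contact_edges n r x y) \<le> 2 * n - 2"
  using card_contact_edges_le card_edges_x_le x_nbrs_y_only_bound k_eq by linarith

end

lemma (in two_runs) two_runs_count: "card (contact_edges n r x y) \<le> 2 * n - 2"
proof (cases "k = n")
  case True
  then show ?thesis
    by (rule count_spanning)
next
  case False
  then have "card ({..<n} - set c) = 1"
    using card_outside k_le_n almost_spanning by simp
  then obtain X where "{..<n} - set c = {X}"
    using card_1_singletonE by blast
  then interpret two_runs_one_extra n r x y c t X
    by unfold_locales
  show ?thesis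
    by (rule count_one_extra)
qed

section \<open>Alternating cycles\<close>

lemma (in tight_cycle) w_neq_if_shift: "j = i + d \<Longrightarrow> 0 < d \<Longrightarrow> d < k \<Longrightarrow> w j \<noteq> w i"
  using w_shift_neq by blast

lemma quadrant_overlap:
  fixes a b xX yX rX \<rho> sx sy :: real
  assumes "sx = 1 \<or> sx = -1" "sy = 1 \<or> sy = -1" "0 < rX" "0 < \<rho>"
    and "\<bar>xX - a\<bar> \<le> rX" "\<bar>yX - b\<bar> \<le> rX" "0 \<le> sx * (xX - a)" "0 \<le> sy * (yX - b)"
  shows "\<bar>xX - (a + sx * \<rho>)\<bar> < rX + \<rho>" "\<bar>yX - (b + sy * \<rho>)\<bar> < rX + \<rho>"
  using assms by (auto simp: abs_less_iff abs_le_iff)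

lemma diagonal_contacts_contain_corner:
  fixes f a b xX yX rX rp rq :: real
  assumes "f = 1 \<or> f = -1"
    and "\<bar>xX - (a - f * rp)\<bar> \<le> rX + rp" "\<bar>yX - (b + rp)\<bar> \<le> rX + rp"
    and "\<bar>xX - (a + f * rq)\<bar> \<le> rX + rq" "\<bar>yX - (b - rq)\<bar> \<le> rX + rq"
  shows "\<bar>xX - a\<bar> \<le> rX" "\<bar>yX - b\<bar> \<le> rX"
  using assms by (auto simp: abs_le_iff)

locale alternating_cycle =
  fixes n :: nat and r x y :: "nat \<Rightarrow> real" and c :: "nat list"
  assumes packing: "homothetic_packing n r x y"
    and x_cycle: "is_cycle n (edges_x n r x y) c"
    and alternating: "\<And>i. dir x c (Suc i) = - dir x c i"

sublocale alternating_cycle \<subseteq> tight_cycle n r x c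
  using tight_cycle_edges_x[OF packing x_cycle] .

context alternating_cycle
begin

abbreviation lo where "lo v \<equiv> y v - r v"
abbreviation hi where "hi v \<equiv> y v + r v"

lemma dir_Suc_Suc: "dir x c (Suc (Suc i)) = dir x c i"
  by (simp add: alternating)

lemma dir_prev_alt: "dir x c (i + k - 1) = - dir x c i"
  using alternating[of "i + k - 1"] dir_prev_Suc[of i] by simp

lemma dir_power: "dir x c i = (-1) ^ i * dir x c 0"
  by (induction i) (simp_all add: alternating)

lemma even_length: "even k"
proof (rule ccontr)
  assume "odd k"
  have "dir x c k = dir x c 0"
    by (rule dir_cong) simp
  then have "- dir x c 0 = dir x c 0"
    using dir_power[of k] \<open>odd k\<close> by simp
  then show False
    using dir_cases[of x c 0] by auto
qed

definition axis where "axis = x (w 0) + of_int (dir x c 0) * r (w 0)"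

lemma on_axis: "x (w i) + of_int (dir x c i) * r (w i) = axis"
proof (induction i)
  case (Suc i)
  have "x (w (Suc i)) + of_int (dir x c (Suc i)) * r (w (Suc i)) = x (w i) + of_int (dir x c i) * r (w i)"
    using step[of i] alternating[of i] by (simp add: algebra_simps)
  then show ?case
    using Suc by simp
qed (simp add: axis_def)

lemma same_side_x_dist:
  assumes same: "dir x c i = dir x c j"
  shows "\<bar>x (w i) - x (w j)\<bar> = \<bar>r (w i) - r (w j)\<bar>"
proof -
  have "x (w i) - x (w j) = of_int (dir x c i) * (r (w j) - r (w i))"
    using on_axis[of i] on_axis[of j] same by (simp add: algebra_simps)
  then show ?thesis
    using dir_cases[of x c i] by (auto simp: abs_minus_commute)
qed

lemma same_side_separated:
  assumes same: "dir x c i = dir x c j" and "w i \<noteq> w j"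
  shows "hi (w i) \<le> lo (w j) \<or> hi (w j) \<le> lo (w i)"
proof -
  have "\<bar>x (w i) - x (w j)\<bar> < r (w i) + r (w j)"
    using same_side_x_dist[OF same] radius_w_pos[of i] radius_w_pos[of j] by (simp add: abs_if)
  then have "r (w i) + r (w j) \<le> \<bar>y (w i) - y (w j)\<bar>"
    using packing_separated[OF packing w_less w_less assms(2)] by linarith
  then show ?thesis
    unfolding abs_le_iff by (auto simp: abs_if split: if_splits)
qed

lemma consecutive_y_overlap: "lo (w i) \<le> hi (w (Suc i))" "lo (w (Suc i)) \<le> hi (w i)"
proof -
  have "{w i, w (Suc i)} \<in> edges_x n r x y"
    by (rule is_cycle_edge[OF x_cycle])
  then have "\<bar>y (w i) - y (w (Suc i))\<bar> \<le> r (w i) + r (w (Suc i))"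
    by (simp add: edges_x_iff)
  then show "lo (w i) \<le> hi (w (Suc i))" "lo (w (Suc i)) \<le> hi (w i)"
    unfolding abs_le_iff by linarith+
qed

definition highest_bottom where "highest_bottom = Max ((\<lambda>i. lo (w i)) ` {..<k})"

lemma bottom_le_highest: "lo (w i) \<le> highest_bottom"
proof -
  have "lo (w (i mod k)) \<le> highest_bottom"
    unfolding highest_bottom_def using length_pos by (intro Max_ge) (auto simp del: cyc_nth_mod)
  then show ?thesis
    by simp
qed

lemma highest_bottom_attained: "\<exists>m. lo (w m) = highest_bottom"
proof -
  have "highest_bottom \<in> (\<lambda>i. lo (w i)) ` {..<k}"
    unfolding highest_bottom_def using length_pos by (intro Max_in) auto
  then show ?thesis
    by auto
qed

lemma top_pair: "\<exists>m. lo (w m) = highest_bottom \<and> lo (w (Suc m)) = highest_bottom"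
proof -
  obtain m0 where m0: "lo (w m0) = highest_bottom"
    using highest_bottom_attained by blast
  let ?a = "Suc m0" and ?b = "m0 + k - 1"
  have ee: "dir x c ?a = dir x c ?b"
    using alternating[of m0] dir_prev_alt[of m0] by simp
  have ne: "w ?a \<noteq> w ?b"
  proof -
    have d: "0 < k - 2" "k - 2 < k"
      using length_ge_3 by auto
    have "?b = ?a + (k - 2)"
      using length_ge_3 by simp
    then show ?thesis
      using w_shift_neq[OF d, of ?a] by metis
  qed
  have a1: "lo (w m0) \<le> hi (w ?a)"
    using consecutive_y_overlap[of m0] by simp
  have a2: "lo (w m0) \<le> hi (w ?b)"
    using consecutive_y_overlap[of ?b] w_prev[of m0] by simp
  from same_side_separated[OF ee ne] show ?thesis
  proof
    assume "hi (w ?a) \<le> lo (w ?b)"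
    then have "lo (w ?b) = highest_bottom"
      using a1 m0 bottom_le_highest[of ?b] by linarith
    then show ?thesis
      using m0 w_prev[of m0] by (intro exI[of _ ?b]) simp
  next
    assume "hi (w ?b) \<le> lo (w ?a)"
    then have "lo (w ?a) = highest_bottom"
      using a2 m0 bottom_le_highest[of ?a] by linarith
    then show ?thesis
      using m0 by (intro exI[of _ m0]) simp
  qed
qed

lemma top_corner:
  obtains m where "lo (w m) = highest_bottom" "lo (w (Suc m)) = highest_bottom" "hi (w (m + k - 1)) = highest_bottom" "hi (w (m + 2)) = highest_bottom"
proof -
  obtain m where m: "lo (w m) = highest_bottom" "lo (w (Suc m)) = highest_bottom"
    using top_pair by blast
  let ?u = "m + k - 1"
  have u1: "dir x c ?u = dir x c (Suc m)"
    using dir_prev_alt[of m] alternating[of m] by simp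
  have u2: "w ?u \<noteq> w (Suc m)"
  proof -
    have d: "0 < k - 2" "k - 2 < k"
      using length_ge_3 by auto
    have "?u = Suc m + (k - 2)"
      using length_ge_3 by simp
    then show ?thesis
      using w_shift_neq[OF d, of "Suc m"] by metis
  qed
  have hu: "hi (w ?u) = highest_bottom"
  proof -
    have "hi (w ?u) \<ge> lo (w m)"
      using consecutive_y_overlap[of ?u] w_prev[of m] by simp
    moreover have "hi (w ?u) \<le> lo (w (Suc m))"
      using same_side_separated[OF u1 u2] m radius_w_pos[of "Suc m"] bottom_le_highest[of ?u] by auto
    ultimately show ?thesis
      using m by simp
  qed
  have v1: "dir x c (m + 2) = dir x c m"
    using dir_Suc_Suc[of m] by simp
  have v2: "w (m + 2) \<noteq> w m"
    using w_shift_neq[of 2 m] length_ge_3 by auto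
  have hv: "hi (w (m + 2)) = highest_bottom"
  proof -
    have "hi (w (m + 2)) \<ge> lo (w (Suc m))"
      using consecutive_y_overlap[of "Suc m"] by (simp add: numeral_2_eq_2)
    moreover have "hi (w (m + 2)) \<le> lo (w m)"
      using same_side_separated[OF v1 v2] m radius_w_pos[of m] bottom_le_highest[of "m + 2"] by auto
    ultimately show ?thesis
      using m by simp
  qed
  show ?thesis
    using that m hu hv by blast
qed

lemma w_shift_not_top:
  assumes "2 \<le> j" "j < k"
  shows "w (m + j) \<notin> {w m, w (Suc m)}"
  using assms w_neq_if_shift[of "m + j" m j] w_neq_if_shift[of "m + j" "Suc m" "j - 1"] by auto

lemma second_layer:
  assumes top: "lo (w m) = highest_bottom" "lo (w (Suc m)) = highest_bottom"
  obtains h2 where "h2 < highest_bottom" "\<And>i. w i \<notin> {w m, w (Suc m)} \<Longrightarrow> lo (w i) \<le> h2"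
    "\<exists>j. w j \<notin> {w m, w (Suc m)} \<and> lo (w j) = h2"
proof -
  define S where "S = set c - {w m, w (Suc m)}"
  have "w (m + 2) \<in> S"
    using w_shift_not_top[of 2] length_ge_3 w_in_set by (simp add: S_def)
  then have "Max (lo ` S) \<in> lo ` S"
    by (intro Max_in) (auto simp: S_def)
  then obtain v where v: "v \<in> S" "lo v = Max (lo ` S)"
    by auto
  then have "v \<in> set c"
    by (simp add: S_def)
  then obtain j where "v = w j"
    unfolding in_set_iff_cyc_nth by blast
  with v have j: "w j \<in> S" "lo (w j) = Max (lo ` S)"
    by simp_all
  have below: "lo (w i) \<le> Max (lo ` S)" if "w i \<notin> {w m, w (Suc m)}" for i
    using that w_in_set by (intro Max_ge) (auto simp: S_def)
  have "hi (w j) \<le> highest_bottom"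
  proof (cases "dir x c j = dir x c m")
    case True
    then show ?thesis
      using same_side_separated[OF True] j(1) top radius_w_pos[of m] bottom_le_highest[of j]
      by (auto simp: S_def)
  next
    case False
    then have "dir x c j = dir x c (Suc m)"
      using dir_cases[of x c j] dir_cases[of x c m] alternating[of m] by auto
    then show ?thesis
      using same_side_separated j(1) top radius_w_pos[of "Suc m"] bottom_le_highest[of j]
      by (fastforce simp: S_def)
  qed
  then have "Max (lo ` S) < highest_bottom"
    using j(2) radius_w_pos[of j] by simp
  then show ?thesis
    using that below j by (auto simp: S_def)
qed

lemma equal_radii:
  assumes k5: "5 \<le> k"
  obtains a b where "a < n" "b < n" "a \<noteq> b" "r a = r b"
proof -
  obtain m where top: "lo (w m) = highest_bottom" "lo (w (Suc m)) = highest_bottom"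
    and below_top: "hi (w (m + k - 1)) = highest_bottom" "hi (w (m + 2)) = highest_bottom"
    using top_corner by blast
  obtain h2 where h2: "h2 < highest_bottom" "\<And>i. w i \<notin> {w m, w (Suc m)} \<Longrightarrow> lo (w i) \<le> h2"
    and attained: "\<exists>j. w j \<notin> {w m, w (Suc m)} \<and> lo (w j) = h2"
    using second_layer[OF top] by blast
  txt \<open>The squares \<open>w (m + k - 1)\<close> and \<open>w (m + 2)\<close> below the top pair share their top; both also
    have bottom \<open>h2\<close>, hence equal radii.\<close>
  have lo_le_shift: "lo (w (m + j)) \<le> h2" if "2 \<le> j" "j < k" for j
    using h2(2) w_shift_not_top[OF that] by blast
  have shifts: "m + k - 1 = m + (k - 1)" "m + k - 2 = m + (k - 2)" "Suc (m + k - 2) = m + k - 1"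
    using k5 by auto
  have lo_u: "lo (w (m + k - 1)) \<le> h2"
    unfolding shifts(1) by (rule lo_le_shift) (use k5 in auto)
  have lo_v: "lo (w (m + 2)) \<le> h2"
    by (rule lo_le_shift) (use k5 in auto)
  have lo_y0: "lo (w (m + 3)) \<le> h2"
    by (rule lo_le_shift) (use k5 in auto)
  have lo_y1: "lo (w (m + k - 2)) \<le> h2"
    unfolding shifts(2) by (rule lo_le_shift) (use k5 in auto)
  have side_u: "dir x c (m + k - 1) = dir x c (Suc m)"
    using dir_prev_alt[of m] alternating[of m] by simp
  have side_v: "dir x c (m + 2) = dir x c m"
    using dir_Suc_Suc[of m] by (simp add: numeral_2_eq_2)
  have side_y0: "dir x c (m + 3) = dir x c (m + k - 1)"
    using dir_prev_alt[of m] alternating dir_Suc_Suc[of "Suc m"] by (simp add: numeral_3_eq_3)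
  have side_y1: "dir x c (m + k - 2) = dir x c (m + 2)"
    using alternating[of "m + k - 2"] shifts(3) side_u alternating[of m] side_v by simp
  have "lo (w (m + k - 1)) = h2 \<or> lo (w (m + 2)) = h2"
  proof (rule ccontr)
    assume "\<not> ?thesis"
    then have lt: "lo (w (m + k - 1)) < h2" "lo (w (m + 2)) < h2"
      using lo_u lo_v by auto
    obtain j where j: "w j \<notin> {w m, w (Suc m)}" "lo (w j) = h2"
      using attained by blast
    have "dir x c j = dir x c (m + 2) \<or> dir x c j = dir x c (m + k - 1)"
      using dir_cases[of x c j] dir_cases[of x c m] alternating[of m] side_u side_v by auto
    then show False
    proof
      assume same: "dir x c j = dir x c (m + 2)"
      have "w j \<noteq> w (m + 2)"
        using lt j(2) by auto
      then show False
        using same_side_separated[OF same] lt j(2) h2(1) below_top radius_w_pos[of j] by auto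
    next
      assume same: "dir x c j = dir x c (m + k - 1)"
      have "w j \<noteq> w (m + k - 1)"
        using lt j(2) by auto
      then show False
        using same_side_separated[OF same] lt j(2) h2(1) below_top radius_w_pos[of j] by auto
    qed
  qed
  moreover have "lo (w (m + k - 1)) = h2" if "lo (w (m + 2)) = h2"
  proof -
    have "w (m + k - 1) \<noteq> w (m + 3)"
      by (rule w_neq_if_shift[of _ _ "k - 4"]) (use k5 in auto)
    then have "w (m + 3) \<noteq> w (m + k - 1)"
      by (rule not_sym)
    moreover have "h2 \<le> hi (w (m + 3))"
      using consecutive_y_overlap(1)[of "m + 2"] that by (simp add: numeral_3_eq_3 numeral_2_eq_2)
    ultimately show ?thesis
      using same_side_separated[OF side_y0] lo_u lo_y0 below_top h2(1) by auto
  qed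
  moreover have "lo (w (m + 2)) = h2" if "lo (w (m + k - 1)) = h2"
  proof -
    have "w (m + k - 2) \<noteq> w (m + 2)"
      by (rule w_neq_if_shift[of _ _ "k - 4"]) (use k5 in auto)
    moreover have "h2 \<le> hi (w (m + k - 2))"
      using consecutive_y_overlap(2)[of "m + k - 2"] that shifts(3) by simp
    ultimately show ?thesis
      using same_side_separated[OF side_y1] lo_v lo_y1 below_top h2(1) by auto
  qed
  ultimately have "r (w (m + k - 1)) = r (w (m + 2))"
    using below_top by auto
  moreover have "w (m + k - 1) \<noteq> w (m + 2)"
    by (rule w_neq_if_shift[of _ _ "k - 3"]) (use k5 in auto)
  ultimately show ?thesis
    using that w_less by blast
qed

lemma pinwheel:
  assumes "k = 4"
  obtains f P1 P2 P3 P4 where "f = 1 \<or> f = -1" "set c = {P1, P2, P3, P4}"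
    "x P1 = axis - f * r P1" "y P1 = highest_bottom + r P1"
    "x P2 = axis + f * r P2" "y P2 = highest_bottom + r P2"
    "x P3 = axis + f * r P3" "y P3 = highest_bottom - r P3"
    "x P4 = axis - f * r P4" "y P4 = highest_bottom - r P4"
proof -
  obtain m where m: "lo (w m) = highest_bottom" "lo (w (Suc m)) = highest_bottom"
    "hi (w (m + k - 1)) = highest_bottom" "hi (w (m + 2)) = highest_bottom"
    using top_corner by blast
  have "m + k - 1 = m + 3"
    using assms by simp
  then have y_P3: "hi (w (m + 3)) = highest_bottom"
    using m(3) by simp
  have "w (Suc m) \<noteq> w m" "w (m + 2) \<noteq> w m" "w (m + 3) \<noteq> w m"
    "w (m + 2) \<noteq> w (Suc m)" "w (m + 3) \<noteq> w (Suc m)" "w (m + 3) \<noteq> w (m + 2)"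
    using assms w_neq_if_shift[of "Suc m" m 1] w_neq_if_shift[of "m + 2" m 2]
      w_neq_if_shift[of "m + 3" m 3] w_neq_if_shift[of "m + 2" "Suc m" 1]
      w_neq_if_shift[of "m + 3" "Suc m" 2] w_neq_if_shift[of "m + 3" "m + 2" 1]
    by simp_all
  then have "card {w m, w (Suc m), w (m + 3), w (m + 2)} = k"
    using assms by auto
  then have set_c: "set c = {w m, w (Suc m), w (m + 3), w (m + 2)}"
    using distinct_card[OF distinct] w_in_set by (intro card_subset_eq[symmetric]) auto
  have x_w: "x (w i) = axis - of_int (dir x c i) * r (w i)" for i
    using on_axis[of i] by simp
  have dirs: "dir x c (Suc m) = - dir x c m" "dir x c (m + 2) = dir x c m" "dir x c (m + 3) = - dir x c m"
    using alternating dir_Suc_Suc by (simp_all add: numeral_2_eq_2 numeral_3_eq_3)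
  show ?thesis
  proof (rule that[of "of_int (dir x c m)", OF _ set_c])
    show "of_int (dir x c m) = (1::real) \<or> of_int (dir x c m) = (-1::real)"
      using dir_cases[of x c m] by auto
  qed (use m y_P3 x_w dirs in simp_all)
qed

lemma card_contacts_of_outside_square:
  assumes "k = 4" and X: "X < n" "X \<notin> set c"
  shows "card {P \<in> set c. {X, P} \<in> contact_edges n r x y} \<le> 2"
proof -
  obtain f P1 P2 P3 P4 where f: "f = 1 \<or> f = -1" and set_c: "set c = {P1, P2, P3, P4}"
    and P1: "x P1 = axis - f * r P1" "y P1 = highest_bottom + r P1"
    and P2: "x P2 = axis + f * r P2" "y P2 = highest_bottom + r P2"
    and P3: "x P3 = axis + f * r P3" "y P3 = highest_bottom - r P3"
    and P4: "x P4 = axis - f * r P4" "y P4 = highest_bottom - r P4"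
    using pinwheel[OF assms(1)] by blast
  have P_props: "r P > 0" "P < n" "X \<noteq> P" if "P \<in> set c" for P
    using that set_subset radius_pos X(2) by auto
  have contact: "\<bar>x X - x P\<bar> \<le> r X + r P" "\<bar>y X - y P\<bar> \<le> r X + r P"
    if "{X, P} \<in> contact_edges n r x y" for P
    using that contact_edges_iff[of n r] radius_pos by auto
  have no_corner: "\<not> (\<bar>x X - axis\<bar> \<le> r X \<and> \<bar>y X - highest_bottom\<bar> \<le> r X)"
  proof
    assume corner: "\<bar>x X - axis\<bar> \<le> r X \<and> \<bar>y X - highest_bottom\<bar> \<le> r X"
    define sx :: real where "sx = (if axis \<le> x X then 1 else -1)"
    define sy :: real where "sy = (if highest_bottom \<le> y X then 1 else -1)"
    have signs: "sx = 1 \<or> sx = -1" "sy = 1 \<or> sy = -1"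
      "0 \<le> sx * (x X - axis)" "0 \<le> sy * (y X - highest_bottom)"
      by (auto simp: sx_def sy_def)
    obtain P where P: "P \<in> set c" "x P = axis + sx * r P" "y P = highest_bottom + sy * r P"
    proof -
      consider "sy = 1" "sx = - f" | "sy = 1" "sx = f" | "sy = -1" "sx = f" | "sy = -1" "sx = - f"
        using signs(1,2) f by fastforce
      then show ?thesis
        by cases (use that set_c P1 P2 P3 P4 in auto)
    qed
    then have "\<bar>x X - x P\<bar> < r X + r P" "\<bar>y X - y P\<bar> < r X + r P"
      using quadrant_overlap[OF signs(1,2) radius_pos[OF X(1)] P_props(1)[OF P(1)] _ _ signs(3,4)] corner
      by auto
    then show False
      using packing_separated[OF packing X(1) P_props(2,3)[OF P(1)]] by (simp add: abs_minus_commute)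
  qed
  have not_13: "\<not> ({X, P1} \<in> contact_edges n r x y \<and> {X, P3} \<in> contact_edges n r x y)"
    using diagonal_contacts_contain_corner[OF f,
        where a = axis and b = highest_bottom and xX = "x X" and yX = "y X" and rX = "r X" and rp = "r P1" and rq = "r P3"]
      contact[of P1] contact[of P3] P1 P3 no_corner by auto
  have "- f = 1 \<or> - f = -1"
    using f by auto
  then have not_24: "\<not> ({X, P2} \<in> contact_edges n r x y \<and> {X, P4} \<in> contact_edges n r x y)"
    using diagonal_contacts_contain_corner[where f = "- f" and
        a = axis and b = highest_bottom and xX = "x X" and yX = "y X" and rX = "r X" and rp = "r P2" and rq = "r P4"]
      contact[of P2] contact[of P4] P2 P4 no_corner by auto
  have card_pair: "card {a, b} \<le> 2" for a b :: nat
    by (cases "a = b") auto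
  define NX where "NX = {P \<in> set c. {X, P} \<in> contact_edges n r x y}"
  have "NX \<subseteq> {P2, P3} \<or> NX \<subseteq> {P2, P1} \<or> NX \<subseteq> {P4, P3} \<or> NX \<subseteq> {P4, P1}"
    using not_13 not_24 set_c by (auto simp: NX_def)
  then have "card NX \<le> 2"
    using card_pair by (metis card_mono finite.emptyI finite.insertI le_trans)
  then show ?thesis
    by (simp add: NX_def)
qed

lemma count_four:
  assumes "k = 4" "n = 5"
  shows "card (contact_edges n r x y) \<le> 8"
proof -
  have "card ({..<n} - set c) = 1"
    using card_outside assms by simp
  then obtain X where "{..<n} - set c = {X}"
    by (rule card_1_singletonE)
  then have X: "X < n" "X \<notin> set c" and outside: "\<And>v. v < n \<Longrightarrow> v \<notin> set c \<Longrightarrow> v = X"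
    by auto
  define NX where "NX = {P \<in> set c. {X, P} \<in> contact_edges n r x y}"
  have "contact_edges n r x y \<subseteq> {e. e \<subseteq> set c \<and> card e = 2} \<union> (\<lambda>P. {X, P}) ` NX"
  proof
    fix e assume e: "e \<in> contact_edges n r x y"
    then obtain i j where ij: "e = {i, j}" "i < n" "j < n" "i \<noteq> j"
      by (rule contact_edgesE)
    consider "i \<in> set c" "j \<in> set c" | "i = X" "j \<in> set c" | "j = X" "i \<in> set c"
      using ij outside by blast
    then show "e \<in> {e. e \<subseteq> set c \<and> card e = 2} \<union> (\<lambda>P. {X, P}) ` NX"
      by cases (use e ij in \<open>auto simp: NX_def insert_commute\<close>)
  qed
  then have "card (contact_edges n r x y) \<le> card ({e. e \<subseteq> set c \<and> card e = 2} \<union> (\<lambda>P. {X, P}) ` NX)"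
    by (rule card_mono[rotated]) (simp add: NX_def)
  also have "\<dots> \<le> card {e. e \<subseteq> set c \<and> card e = 2} + card ((\<lambda>P. {X, P}) ` NX)"
    by (rule card_Un_le)
  also have "card {e. e \<subseteq> set c \<and> card e = 2} = 6"
    using n_subsets[of "set c" 2] distinct_card[OF distinct] assms(1) by (simp add: numeral_eq_Suc)
  also have "card ((\<lambda>P. {X, P}) ` NX) \<le> 2"
    using card_image_le[of NX "\<lambda>P. {X, P}"] card_contacts_of_outside_square[OF assms(1) X]
    by (simp add: NX_def)
  finally show ?thesis
    by simp
qed

lemma alternating_count:
  assumes "weak_generic n r" "5 \<le> n" "n \<le> k + 1"
  shows "card (contact_edges n r x y) \<le> 2 * n - 2"
proof (cases "5 \<le> k")
  case True
  then obtain a b where ab: "a < n" "b < n" "a \<noteq> b" "r a = r b"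
    by (rule equal_radii)
  have "6 \<le> k"
    using True even_length by presburger
  then have "card {a} + card {b} + 4 \<le> n"
    using is_cycle_length_le[OF x_cycle] by simp
  then show ?thesis
    using weak_generic_sums_differ[OF assms(1), of "{a}" "{b}"] ab by auto
next
  case False
  then have "k = 4"
    using even_length length_ge_3 by presburger
  then show ?thesis
    using count_four assms(2,3) by simp
qed

end

lemma (in tight_cycle) rotation_up_then_down:
  obtains s where "dir z (rotate s c) 0 = 1" "dir z (rotate s c) (k - 1) = -1"
proof -
  obtain a1 a2 where a: "a1 < k" "dir z c a1 = 1" "a2 < k" "dir z c a2 = -1"
    using dir_takes_both_signs by blast
  obtain s where s: "dir z c (s + k - 1) \<noteq> 1" "dir z c s = 1"
    using periodic_switch[of k "\<lambda>i. dir z c i = 1", OF length_pos _ a(1,2) a(3)] a(4) by auto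
  have "dir z (rotate s c) i = dir z c (i + s)" for i
    using dir_rotate[OF nonempty] .
  moreover have "k - 1 + s = s + k - 1"
    using length_pos by linarith
  ultimately show ?thesis
    using that[of s] s dir_cases[of z c "s + k - 1"] by simp
qed

lemma card_contact_edges_small:
  assumes "n \<le> 4"
  shows "card (contact_edges n r x y) \<le> 2 * n - 2"
proof -
  have "card (contact_edges n r x y) \<le> card {e. e \<subseteq> {..<n} \<and> card e = 2}"
    by (rule card_mono[OF _ contact_edges_subset_pairs]) simp
  also have "\<dots> = n choose 2"
    by (simp add: n_subsets)
  also have "\<dots> \<le> 2 * n - 2"
    using \<open>n \<le> 4\<close> by (auto simp: choose_two le_Suc_eq numeral_eq_Suc)
  finally show ?thesis .
qed

lemma count_with_x_cycle:
  assumes packing: "homothetic_packing n r x y" and generic: "weak_generic n r"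
    and x_cycle: "is_cycle n (edges_x n r x y) c" and long: "n \<le> length c + 1"
  shows "card (contact_edges n r x y) \<le> 2 * n - 2"
proof (cases "n \<le> 4")
  case True
  then show ?thesis
    by (rule card_contact_edges_small)
next
  case False
  interpret tight_cycle n r x c
    using tight_cycle_edges_x[OF packing x_cycle] .
  obtain s where s: "dir x (rotate s c) 0 = 1" "dir x (rotate s c) (k - 1) = -1"
    by (rule rotation_up_then_down)
  define c' where "c' = rotate s c"
  have cycle': "is_cycle n (edges_x n r x y) c'" and length': "length c' = k"
    unfolding c'_def using is_cycle_rotate[OF x_cycle] by simp_all
  interpret rotated: tight_cycle n r x c'
    using tight_cycle_edges_x[OF packing cycle'] .
  show ?thesis
  proof (cases "\<forall>i. dir x c' (Suc i) = - dir x c' i")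
    case True
    then interpret alternating_cycle n r x y c'
      using packing cycle' by unfold_locales auto
    show ?thesis
      using alternating_count generic False long length' by simp
  next
    case False
    then have "card (turns x c') \<le> 3"
      using rotated.alternating_or_few_turns[OF generic] by auto
    then obtain t where "0 < t" "t < length c'" "\<And>i. i < t \<Longrightarrow> dir x c' i = 1"
      "\<And>i. t \<le> i \<Longrightarrow> i < length c' \<Longrightarrow> dir x c' i = -1"
      using rotated.two_monotone_runs s length' unfolding c'_def by metis
    then interpret two_runs n r x y c' t
      using packing generic cycle' long length' \<open>\<not> n \<le> 4\<close> by unfold_locales auto
    show ?thesis
      by (rule two_runs_count)
  qed
qed

theorem lemma19:
  fixes n :: nat and r x y :: "nat \<Rightarrow> real"
  assumes "homothetic_packing n r x y"
    and "weak_generic n r"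
    and "\<exists>c. (is_cycle n (edges_x n r x y) c \<or> is_cycle n (edges_y n r x y) c)
              \<and> length c + 1 \<ge> n"
  shows "card (contact_edges n r x y) \<le> 2 * n - 2"
proof -
  obtain c where c: "is_cycle n (edges_x n r x y) c \<or> is_cycle n (edges_y n r x y) c" "n \<le> length c + 1"
    using assms(3) by blast
  then show ?thesis
  proof (elim disjE)
    assume "is_cycle n (edges_x n r x y) c"
    then show ?thesis
      using count_with_x_cycle[OF assms(1,2)] c(2) by blast
  next
    assume "is_cycle n (edges_y n r x y) c"
    then have "is_cycle n (edges_x n r y x) c"
      by (simp add: edges_x_swap)
    then have "card (contact_edges n r y x) \<le> 2 * n - 2"
      using count_with_x_cycle[of n r y x] assms(1,2) c(2) homothetic_packing_swap by blast
    then show ?thesis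
      by (simp add: contact_edges_swap)
  qed
qed

end
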